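(* Let $\mathcal M_{A,B,\partial}$ be an $M$-pair. Every $\partial$-boundary homologically essential element of $B$ is $\partial_B$-homologically essential. The number of $\partial$-boundary homologically essential elements of degree $k$ equals $\dim\partial_*\big(H_{k+1}(\mathbb E(A),\mathbb E(B),\partial)\big)$.
   Context: $\mathbb E$ is a field. $A=\{a_1\prec\dots\prec a_N\}$ is a finite linearly ordered set with grading $\deg:A\to\mathbb Z$, $\mathbb E(A)$ the graded vector space with basis $A$. An $M$-differential on $\mathbb E(A)$ is a degree $-1$ linear map $\partial$ with $\partial^2=0$ and $\partial(a_i)\in\mathrm{span}\{a_1,\dots,a_{i-1}\}$. For $B\subset A$ with $\partial(\mathbb E(B))\subset\mathbb E(B)$, $\mathcal M_{A,B,\partial}$ is an $M$-pair and $\partial_B=\partial|_{\mathbb E(B)}$ is an $M$-differential on $\mathbb E(B)$ (with induced order and grading). For an $M$-complex $\mathcal M_{A,\partial}$, equivalence means conjugation by a graded automorphism preserving each $\mathrm{span}\{a_1,\dots,a_i\}$; an $M$-differential is elementary if each basis element maps to $0$ or to a single basis element, and no two basis elements map to the same basis element; every $M$-differential $\partial$ is equivalent to a unique elementary $\partial_1$ (Barannikov); $a_i,a_j$ form a $\partial$-pair if $\partial_1(a_i)=a_j$, and an element is $\partial$-homologically essential if it lies in no $\partial$-pair. Let $B=\{b_1\prec\dots\prec b_K\}$, $B^k=\{b_1,\dots,b_k\}$, $\iota_*:H_*(\mathbb E(B^k),\partial_B)\to H_*(\mathbb E(B),\partial_B)$ induced by inclusion, and $\partial_*:H_{*+1}(\mathbb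 E(A),\mathbb E(B),\partial)\to H_*(\mathbb E(B),\partial_B)$ the connecting map of the long exact sequence of the pair. Set $I_k=\iota_*H_*(\mathbb E(B^k),\partial_B)\cap\partial_*H_*(\mathbb E(A),\mathbb E(B),\partial)$, $I_0=0$. An element $b_k$ is $\partial$-boundary homologically essential if $I_k\ne I_{k-1}$. *)

theory Defs
  imports Complex_Main "HOL-Library.Function_Algebras"
begin

text \<open>Basis elements are natural numbers; a finite set S of naturals, ordered by the
usual order on nat, is the ordered basis. The graded space E(S) is the space of
functions nat => 'a supported in S. A linear map on E(S) is given by its matrix
M :: nat => nat => 'a, where the image of the basis element j is
sum over i of M i j times the basis element i.\<close>

definition fscale :: "'a::field \<Rightarrow> (nat \<Rightarrow> 'a) \<Rightarrow> (nat \<Rightarrow> 'a)" where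
  "fscale c f = (\<lambda>i. c * f i)"

global_interpretation fvs: vector_space "fscale :: 'a::field \<Rightarrow> (nat \<Rightarrow> 'a) \<Rightarrow> _"
  by unfold_locales (auto simp: fscale_def algebra_simps fun_eq_iff)

definition espace :: "nat set \<Rightarrow> (nat \<Rightarrow> 'a::field) set" where
  "espace S = {v. \<forall>i. i \<notin> S \<longrightarrow> v i = 0}"

definition espace_deg :: "nat set \<Rightarrow> (nat \<Rightarrow> int) \<Rightarrow> int \<Rightarrow> (nat \<Rightarrow> 'a::field) set" where
  "espace_deg S deg k = {v. \<forall>i. (i \<notin> S \<or> deg i \<noteq> k) \<longrightarrow> v i = 0}"

definition mapply :: "nat set \<Rightarrow> (nat \<Rightarrow> nat \<Rightarrow> 'a::field) \<Rightarrow> (nat \<Rightarrow> 'a) \<Rightarrow> (nat \<Rightarrow> 'a)" where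
  "mapply S M v = (\<lambda>i. \<Sum>j\<in>S. M i j * v j)"

definition mmult :: "nat set \<Rightarrow> (nat \<Rightarrow> nat \<Rightarrow> 'a::field) \<Rightarrow> (nat \<Rightarrow> nat \<Rightarrow> 'a) \<Rightarrow> (nat \<Rightarrow> nat \<Rightarrow> 'a)" where
  "mmult S M N = (\<lambda>i j. \<Sum>k\<in>S. M i k * N k j)"

definition midentity :: "nat set \<Rightarrow> (nat \<Rightarrow> nat \<Rightarrow> 'a::field)" where
  "midentity S = (\<lambda>i j. if i = j \<and> i \<in> S then 1 else 0)"

definition mrestrict :: "nat set \<Rightarrow> (nat \<Rightarrow> nat \<Rightarrow> 'a::field) \<Rightarrow> (nat \<Rightarrow> nat \<Rightarrow> 'a)" where
  "mrestrict S M = (\<lambda>i j. if i \<in> S \<and> j \<in> S then M i j else 0)"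

definition is_Mdiff :: "nat set \<Rightarrow> (nat \<Rightarrow> int) \<Rightarrow> (nat \<Rightarrow> nat \<Rightarrow> 'a::field) \<Rightarrow> bool" where
  "is_Mdiff S deg D \<longleftrightarrow>
     finite S \<and>
     (\<forall>i j. D i j \<noteq> 0 \<longrightarrow> i \<in> S \<and> j \<in> S \<and> i < j \<and> deg i = deg j - 1) \<and>
     mmult S D D = (\<lambda>i j. 0)"

definition is_elementary :: "nat set \<Rightarrow> (nat \<Rightarrow> int) \<Rightarrow> (nat \<Rightarrow> nat \<Rightarrow> 'a::field) \<Rightarrow> bool" where
  "is_elementary S deg D \<longleftrightarrow>
     is_Mdiff S deg D \<and>
     (\<forall>j\<in>S. (\<forall>i. D i j = 0) \<or> (\<exists>i\<in>S. D i j = 1 \<and> (\<forall>i'. i' \<noteq> i \<longrightarrow> D i' j = 0))) \<and>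
     (\<forall>i j j'. j \<in> S \<longrightarrow> j' \<in> S \<longrightarrow> D i j \<noteq> 0 \<longrightarrow> D i j' \<noteq> 0 \<longrightarrow> j = j')"

definition is_filt_aut :: "nat set \<Rightarrow> (nat \<Rightarrow> int) \<Rightarrow> (nat \<Rightarrow> nat \<Rightarrow> 'a::field) \<Rightarrow> bool" where
  "is_filt_aut S deg T \<longleftrightarrow>
     (\<forall>i j. T i j \<noteq> 0 \<longrightarrow> i \<in> S \<and> j \<in> S \<and> i \<le> j \<and> deg i = deg j) \<and>
     (\<exists>Ti. mmult S T Ti = midentity S \<and> mmult S Ti T = midentity S)"

definition Mequiv :: "nat set \<Rightarrow> (nat \<Rightarrow> int) \<Rightarrow> (nat \<Rightarrow> nat \<Rightarrow> 'a::field) \<Rightarrow> (nat \<Rightarrow> nat \<Rightarrow> 'a) \<Rightarrow> bool" where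
  "Mequiv S deg D D' \<longleftrightarrow>
     (\<exists>T Ti. is_filt_aut S deg T \<and> mmult S T Ti = midentity S \<and> mmult S Ti T = midentity S \<and>
            D' = mmult S Ti (mmult S D T))"

definition barannikov :: "nat set \<Rightarrow> (nat \<Rightarrow> int) \<Rightarrow> (nat \<Rightarrow> nat \<Rightarrow> 'a::field) \<Rightarrow> (nat \<Rightarrow> nat \<Rightarrow> 'a)" where
  "barannikov S deg D = (THE D1. is_elementary S deg D1 \<and> Mequiv S deg D D1)"

text \<open>a_i, a_j form a pair if the canonical form sends a_i to a_j.\<close>
definition is_pair :: "nat set \<Rightarrow> (nat \<Rightarrow> int) \<Rightarrow> (nat \<Rightarrow> nat \<Rightarrow> 'a::field) \<Rightarrow> nat \<Rightarrow> nat \<Rightarrow> bool" where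
  "is_pair S deg D i j \<longleftrightarrow> i \<in> S \<and> j \<in> S \<and> barannikov S deg D j i = 1"

definition hom_essential :: "nat set \<Rightarrow> (nat \<Rightarrow> int) \<Rightarrow> (nat \<Rightarrow> nat \<Rightarrow> 'a::field) \<Rightarrow> nat \<Rightarrow> bool" where
  "hom_essential S deg D a \<longleftrightarrow> a \<in> S \<and> \<not> (\<exists>x. is_pair S deg D a x \<or> is_pair S deg D x a)"

definition is_Mpair :: "nat set \<Rightarrow> nat set \<Rightarrow> (nat \<Rightarrow> int) \<Rightarrow> (nat \<Rightarrow> nat \<Rightarrow> 'a::field) \<Rightarrow> bool" where
  "is_Mpair A B deg D \<longleftrightarrow> is_Mdiff A deg D \<and> B \<subseteq> A \<and>
     (\<forall>v \<in> espace B. mapply A D v \<in> espace B)"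

text \<open>Subspaces of H_*(E(B)) are identified with their preimages in the cycle space
Z(B), i.e. with subspaces of Z(B) containing the boundaries Bd(B).\<close>

definition cycles :: "nat set \<Rightarrow> (nat \<Rightarrow> nat \<Rightarrow> 'a::field) \<Rightarrow> (nat \<Rightarrow> 'a) set" where
  "cycles C D = {v \<in> espace C. mapply C D v = 0}"

definition boundaries :: "nat set \<Rightarrow> (nat \<Rightarrow> nat \<Rightarrow> 'a::field) \<Rightarrow> (nat \<Rightarrow> 'a) set" where
  "boundaries C D = mapply C D ` espace C"

text \<open>Preimage in Z(B) of the image of the connecting map
  H_{*+1}(E(A),E(B)) -> H_*(E(B)): the boundaries d x of relative cycles x.\<close>
definition conn_image :: "nat set \<Rightarrow> nat set \<Rightarrow> (nat \<Rightarrow> nat \<Rightarrow> 'a::field) \<Rightarrow> (nat \<Rightarrow> 'a) set" where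
  "conn_image A B D = {mapply A D x | x. x \<in> espace A \<and> mapply A D x \<in> espace B}"

text \<open>Degree-k part: image of H_{k+1}(E(A),E(B)).\<close>
definition conn_image_deg :: "nat set \<Rightarrow> nat set \<Rightarrow> (nat \<Rightarrow> int) \<Rightarrow> (nat \<Rightarrow> nat \<Rightarrow> 'a::field) \<Rightarrow> int \<Rightarrow> (nat \<Rightarrow> 'a) set" where
  "conn_image_deg A B deg D k =
     {mapply A D x | x. x \<in> espace_deg A deg (k + 1) \<and> mapply A D x \<in> espace B}"

definition boundaries_deg :: "nat set \<Rightarrow> (nat \<Rightarrow> int) \<Rightarrow> (nat \<Rightarrow> nat \<Rightarrow> 'a::field) \<Rightarrow> int \<Rightarrow> (nat \<Rightarrow> 'a) set" where
  "boundaries_deg C deg D k = mapply C D ` espace_deg C deg (k + 1)"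

text \<open>Preimage in Z(B) of I_k for the initial segment Bk = B^k of B:
  (iota_* H(E(B^k)) + 0) intersected with the image of the connecting map.\<close>
definition I_pre :: "nat set \<Rightarrow> nat set \<Rightarrow> (nat \<Rightarrow> nat \<Rightarrow> 'a::field) \<Rightarrow> nat set \<Rightarrow> (nat \<Rightarrow> 'a) set" where
  "I_pre A B D Bk =
     {z + y | z y. z \<in> cycles Bk (mrestrict Bk D) \<and> y \<in> boundaries B (mrestrict B D)}
     \<inter> conn_image A B D"

definition bdry_essential :: "nat set \<Rightarrow> nat set \<Rightarrow> (nat \<Rightarrow> nat \<Rightarrow> 'a::field) \<Rightarrow> nat \<Rightarrow> bool" where
  "bdry_essential A B D b \<longleftrightarrow> b \<in> B \<and>
     I_pre A B D {c \<in> B. c \<le> b} \<noteq> I_pre A B D {c \<in> B. c < b}"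

end

theory Submission
  imports Defs
begin

text \<open>Conjugating by a filtered automorphism brings any M-differential to an elementary one
  (the new top basis element either has a boundary that can be absorbed by lower chains, or it
  is paired with the largest unpaired element in the lift of its boundary). The pairs of the
  elementary form are intrinsic: a_j is paired with a_i exactly when some chain of filtration
  level j has boundary of level i and neither level can be lowered modulo boundaries of lower
  chains. This gives uniqueness. It also shows that if b_k is the source of a pair, no cycle
  of E(B^k) has a b_k component, and if b_k is the target of a pair, the boundary of some chain
  of E(B) lies in E(B^k) with a b_k component, which can be subtracted from any cycle; either
  way I_k = I_(k-1).

  For the count, I_(k-1) and I_k agree outside degree deg b_k, and in that degree the
  coefficient of b_k in a cycle representative is the only extra freedom, so each boundary
  essential element raises the dimension of one graded piece by exactly one. The chain I_k
  runs from the boundaries of E(B) (k = 0) to the image of the connecting map (k = K).\<close>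

section \<open>Finitely supported vectors and matrices\<close>

lemma sum_apply: "(\<Sum>x\<in>A. f x) i = (\<Sum>x\<in>A. f x i)"
  by (induction A rule: infinite_finite_induct) auto

lemma fscale_apply [simp]: "fscale c f i = c * f i"
  by (simp add: fscale_def)

lemma mapply_add: "mapply S M (x + y) = mapply S M x + mapply S M y"
  by (simp add: mapply_def fun_eq_iff distrib_left sum.distrib)

lemma mapply_diff: "mapply S M (x - y) = mapply S M x - mapply S M y"
  by (simp add: mapply_def fun_eq_iff right_diff_distrib sum_subtractf)

lemma mapply_scale: "mapply S M (fscale c x) = fscale c (mapply S M x)"
  by (simp add: mapply_def fun_eq_iff sum_distrib_left mult.left_commute)

lemma mapply_zero [simp]: "mapply S M 0 = 0"
  by (simp add: mapply_def fun_eq_iff)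

lemma mapply_zero_vector [simp]: "mapply S M (\<lambda>k. 0) = 0"
  by (simp add: mapply_def fun_eq_iff)

lemma linear_mapply: "Vector_Spaces.linear fscale fscale (mapply S M)"
  unfolding Vector_Spaces.linear_iff using fvs.vector_space_axioms by (auto simp: mapply_add mapply_scale)

lemma mapply_nonzeroE:
  assumes "mapply S M x i \<noteq> 0"
  obtains s where "s \<in> S" "M i s \<noteq> 0" "x s \<noteq> 0"
  using assms unfolding mapply_def by (metis (mono_tags, lifting) mult_zero_left mult_zero_right sum.neutral)

lemma mmult_col: "mmult S M N i j = mapply S M (\<lambda>k. N k j) i"
  by (simp add: mmult_def mapply_def)

lemma mmult_eq_by_columns:
  "(\<And>j. mapply S M (\<lambda>k. N k j) = mapply S P (\<lambda>k. Q k j)) \<Longrightarrow> mmult S M N = mmult S P Q"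
  by (simp add: fun_eq_iff mmult_col)

lemma mapply_mmult: "mapply S M (mapply S N x) = mapply S (mmult S M N) x"
proof
  fix i
  have "(\<Sum>j\<in>S. M i j * (\<Sum>k\<in>S. N j k * x k)) = (\<Sum>j\<in>S. \<Sum>k\<in>S. M i j * N j k * x k)"
    by (simp add: sum_distrib_left mult.assoc)
  also have "\<dots> = (\<Sum>k\<in>S. \<Sum>j\<in>S. M i j * N j k * x k)"
    by (rule sum.swap)
  also have "\<dots> = (\<Sum>k\<in>S. (\<Sum>j\<in>S. M i j * N j k) * x k)"
    by (simp add: sum_distrib_right)
  finally show "mapply S M (mapply S N x) i = mapply S (mmult S M N) x i"
    by (simp add: mapply_def mmult_def)
qed

lemma mmult_assoc: "mmult S (mmult S M N) P = mmult S M (mmult S N P)"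
proof (intro ext)
  fix i j
  show "mmult S (mmult S M N) P i j = mmult S M (mmult S N P) i j"
    using fun_cong[OF mapply_mmult[of S M N "\<lambda>k. P k j"], of i] by (simp add: mmult_col)
qed

lemma mapply_midentity:
  assumes "finite S" "x \<in> espace S"
  shows "mapply S (midentity S) x = x"
proof
  fix i
  have "mapply S (midentity S) x i = (\<Sum>j\<in>S. if i = j then (if i \<in> S then x j else 0) else 0)"
    unfolding mapply_def midentity_def by (rule sum.cong) auto
  also have "\<dots> = x i"
    using assms by (simp add: espace_def)
  finally show "mapply S (midentity S) x i = x i" .
qed

lemma mmult_midentity_left:
  assumes "finite S" "\<And>i j. M i j \<noteq> 0 \<Longrightarrow> i \<in> S"
  shows "mmult S (midentity S) M = M"
proof (intro ext)
  fix i j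
  have "mmult S (midentity S) M i j = (\<Sum>k\<in>S. if k = i then (if i \<in> S then M i j else 0) else 0)"
    unfolding mmult_def midentity_def by (rule sum.cong) auto
  also have "\<dots> = M i j"
    using assms by (cases "i \<in> S") auto
  finally show "mmult S (midentity S) M i j = M i j" .
qed

lemma espace_zero [simp]: "0 \<in> espace X"
  by (simp add: espace_def)

lemma espace_add: "x \<in> espace X \<Longrightarrow> y \<in> espace X \<Longrightarrow> x + y \<in> espace X"
  by (simp add: espace_def)

lemma espace_diff: "x \<in> espace X \<Longrightarrow> y \<in> espace X \<Longrightarrow> x - y \<in> espace X"
  by (simp add: espace_def)

lemma espace_scale: "x \<in> espace X \<Longrightarrow> fscale c x \<in> espace X"
  by (simp add: espace_def)

lemma espace_mono: "x \<in> espace X \<Longrightarrow> X \<subseteq> Y \<Longrightarrow> x \<in> espace Y"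
  by (auto simp: espace_def)

lemma espaceI: "(\<And>i. i \<notin> X \<Longrightarrow> x i = 0) \<Longrightarrow> x \<in> espace X"
  by (simp add: espace_def)

lemma espaceD: "x \<in> espace X \<Longrightarrow> i \<notin> X \<Longrightarrow> x i = 0"
  by (simp add: espace_def)

lemma subspace_espace: "fvs.subspace (espace X)"
  by (simp add: fvs.subspace_def espace_def)

lemma espace_le_imp_lt:
  "x \<in> espace {s\<in>S. s \<le> b} \<Longrightarrow> x b = 0 \<Longrightarrow> x \<in> espace {s\<in>S. s < b}"
  unfolding espace_def by (auto simp: nless_le)

lemma mapply_espace_eq:
  "finite S \<Longrightarrow> X \<subseteq> S \<Longrightarrow> x \<in> espace X \<Longrightarrow> mapply S M x = mapply X M x"
  unfolding mapply_def fun_eq_iff by (auto intro!: sum.mono_neutral_right simp: espace_def)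

definition unit_vec :: "nat \<Rightarrow> nat \<Rightarrow> 'a::field" where
  "unit_vec s = (\<lambda>i. if i = s then 1 else 0)"

lemma unit_vec_espace: "s \<in> X \<Longrightarrow> unit_vec s \<in> espace X"
  by (simp add: unit_vec_def espace_def)

lemma mapply_unit_vec: "finite S \<Longrightarrow> s \<in> S \<Longrightarrow> mapply S M (unit_vec s) = (\<lambda>i. M i s)"
  by (simp add: mapply_def unit_vec_def fun_eq_iff if_distrib cong: if_cong)

lemma espace_subset_span_unit_vec: "finite X \<Longrightarrow> espace X \<subseteq> fvs.span (unit_vec ` X)"
proof
  fix x :: "nat \<Rightarrow> 'a" assume "finite X" "x \<in> espace X"
  then have "x = (\<Sum>s\<in>X. fscale (x s) (unit_vec s))"
    by (auto simp: fun_eq_iff sum_apply unit_vec_def espace_def if_distrib cong: if_cong)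
  also have "\<dots> \<in> fvs.span (unit_vec ` X)"
    by (intro fvs.span_sum fvs.span_scale fvs.span_base) auto
  finally show "x \<in> fvs.span (unit_vec ` X)" .
qed

context vector_space
begin

lemma span_subset_if_independent_card_ge:
  assumes "finite T" "independent S" "S \<subseteq> span T" "card T \<le> card S"
  shows "span T \<subseteq> span S"
proof -
  have "t \<in> span S" if "t \<in> T" for t
  proof (rule ccontr)
    assume t: "t \<notin> span S"
    have "independent (insert t S)"
      by (rule independent_insertI[OF t assms(2)])
    moreover have "insert t S \<subseteq> span T"
      using assms(3) that span_base by blast
    ultimately have "finite (insert t S) \<and> card (insert t S) \<le> card T"
      by (rule independent_span_bound[OF assms(1)])
    moreover have "t \<notin> S" using t span_base by blast
    ultimately show False using assms(4) by auto
  qed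
  then have "T \<subseteq> span S" by blast
  then show ?thesis by (rule span_minimal[OF _ subspace_span])
qed

end

lemma finite_basis_espace:
  assumes "finite X" "V \<subseteq> espace X"
  shows "\<exists>B. B \<subseteq> V \<and> fvs.independent B \<and> V \<subseteq> fvs.span B \<and> finite B \<and> card B = fvs.dim V"
proof -
  obtain B where B: "B \<subseteq> V" "fvs.independent B" "V \<subseteq> fvs.span B" "card B = fvs.dim V"
    by (rule fvs.basis_exists)
  have "B \<subseteq> fvs.span (unit_vec ` X)"
    using B(1) assms espace_subset_span_unit_vec by blast
  then have "finite B"
    using fvs.independent_span_bound[OF _ B(2)] assms(1) by blast
  with B show ?thesis by blast
qed

lemma linear_inj_on_espace_surj:
  fixes F :: "(nat \<Rightarrow> 'a::field) \<Rightarrow> nat \<Rightarrow> 'a"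
  assumes fin: "finite X" and lin: "Vector_Spaces.linear fscale fscale F"
    and into: "\<And>x. x \<in> espace X \<Longrightarrow> F x \<in> espace X" and inj: "inj_on F (espace X)"
  shows "F ` espace X = espace X"
proof -
  interpret F: Vector_Spaces.linear fscale fscale F by (rule lin)
  obtain B :: "(nat \<Rightarrow> 'a) set"
    where B: "B \<subseteq> espace X" "fvs.independent B" "espace X \<subseteq> fvs.span B" "finite B"
    using finite_basis_espace[OF fin order_refl] by blast
  have span_B: "fvs.span B = espace X"
    using B(1,3) fvs.span_minimal[OF _ subspace_espace] by blast
  have "fvs.independent (F ` B)"
    using F.independent_injective_image[OF B(2)] inj span_B by simp
  moreover have "card (F ` B) = card B"
    using card_image inj_on_subset[OF inj B(1)] by blast
  moreover have "F ` B \<subseteq> fvs.span B"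
    using B(1) into span_B by auto
  ultimately have "fvs.span B \<subseteq> fvs.span (F ` B)"
    using fvs.span_subset_if_independent_card_ge[OF B(4)] by simp
  also have "\<dots> = F ` fvs.span B"
    by (rule F.span_image)
  finally show ?thesis
    using span_B into by auto
qed

lemma dim_insert_espace:
  assumes "finite X" "U \<subseteq> espace X" "fvs.subspace U" "U \<subseteq> V" "V \<subseteq> fvs.span (insert w U)"
    "w \<in> V" "w \<notin> U"
  shows "fvs.dim V = fvs.dim U + 1"
proof -
  obtain B where B: "B \<subseteq> U" "fvs.independent B" "U \<subseteq> fvs.span B" "finite B" "card B = fvs.dim U"
    using finite_basis_espace[OF assms(1,2)] by blast
  have w: "w \<notin> fvs.span B"
    using B(1) assms(3,7) fvs.span_minimal by blast
  have "fvs.dim V = card (insert w B)"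
  proof (rule fvs.dim_unique)
    show "insert w B \<subseteq> V"
      using B(1) assms(4,6) by blast
    have "insert w U \<subseteq> fvs.span (insert w B)"
      using B(3) fvs.span_mono[of B "insert w B"] fvs.span_base[of w "insert w B"] by blast
    then show "V \<subseteq> fvs.span (insert w B)"
      using assms(5) fvs.span_minimal[OF _ fvs.subspace_span] by blast
    show "fvs.independent (insert w B)"
      using w B(2) by (rule fvs.independent_insertI)
  qed simp
  then show ?thesis
    using B(4,5) w fvs.span_base[of w B] by (auto simp: card_insert_if)
qed

section \<open>Triangular matrices and invariant subspaces\<close>

definition down_closed :: "nat set \<Rightarrow> nat set \<Rightarrow> bool" where
  "down_closed S X \<longleftrightarrow> X \<subseteq> S \<and> (\<forall>a\<in>S. \<forall>b\<in>X. a \<le> b \<longrightarrow> a \<in> X)"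

definition upper_triangular :: "nat set \<Rightarrow> (nat \<Rightarrow> nat \<Rightarrow> 'a::field) \<Rightarrow> bool" where
  "upper_triangular S T \<longleftrightarrow> (\<forall>i j. T i j \<noteq> 0 \<longrightarrow> i \<in> S \<and> j \<in> S \<and> i \<le> j)"

definition invariant :: "nat set \<Rightarrow> (nat \<Rightarrow> nat \<Rightarrow> 'a::field) \<Rightarrow> bool" where
  "invariant X M \<longleftrightarrow> (\<forall>i j. j \<in> X \<longrightarrow> M i j \<noteq> 0 \<longrightarrow> i \<in> X)"

lemma down_closed_le [simp]: "down_closed S {s\<in>S. s \<le> j}"
  by (auto simp: down_closed_def)

lemma down_closed_less [simp]: "down_closed S {s\<in>S. s < j}"
  by (auto simp: down_closed_def)

lemma down_closed_self [simp]: "down_closed S S"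
  by (auto simp: down_closed_def)

lemma mapply_invariant:
  assumes "invariant X M" "x \<in> espace X"
  shows "mapply S M x \<in> espace X"
proof (rule espaceI)
  fix i assume "i \<notin> X"
  then have "M i s * x s = 0" for s
    using assms by (cases "s \<in> X") (auto simp: invariant_def espace_def)
  then show "mapply S M x i = 0"
    by (auto simp: mapply_def intro!: sum.neutral)
qed

lemma upper_triangular_invariant: "upper_triangular S T \<Longrightarrow> down_closed S X \<Longrightarrow> invariant X T"
  unfolding upper_triangular_def down_closed_def invariant_def by blast

lemma Mdiff_upper_triangular: "is_Mdiff S deg D \<Longrightarrow> upper_triangular S D"
  by (auto simp: is_Mdiff_def upper_triangular_def dest: less_imp_le)

lemma mapply_mrestrict_invariant:
  assumes "finite S" "X \<subseteq> S" "invariant X M" "x \<in> espace X"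
  shows "mapply X (mrestrict X M) x = mapply S M x"
proof
  fix i
  show "mapply X (mrestrict X M) x i = mapply S M x i"
  proof (cases "i \<in> X")
    case True
    then show ?thesis
      unfolding mapply_espace_eq[OF assms(1,2,4)] by (simp add: mapply_def mrestrict_def)
  next
    case False
    then show ?thesis
      using espaceD[OF mapply_invariant[OF assms(3,4)]] by (simp add: mapply_def mrestrict_def)
  qed
qed

lemma is_Mdiff_restrict:
  assumes Md: "is_Mdiff S deg D" and XS: "X \<subseteq> S" and inv: "invariant X D"
  shows "is_Mdiff X deg (mrestrict X D)"
proof -
  have fin: "finite S" using Md by (simp add: is_Mdiff_def)
  have "mmult X (mrestrict X D) (mrestrict X D) i j = 0" for i j
  proof (cases "i \<in> X \<and> j \<in> X")
    case True
    have "mmult X (mrestrict X D) (mrestrict X D) i j = (\<Sum>k\<in>X. D i k * D k j)"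
      using True by (simp add: mmult_def mrestrict_def)
    also have "\<dots> = mmult S D D i j"
      unfolding mmult_def using True inv
      by (intro sum.mono_neutral_left[OF fin XS]) (auto simp: invariant_def)
    finally show ?thesis
      using Md by (simp add: is_Mdiff_def)
  qed (auto simp: mmult_def mrestrict_def intro!: sum.neutral)
  then show ?thesis
    using Md XS finite_subset[OF XS] by (auto simp: is_Mdiff_def mrestrict_def fun_eq_iff)
qed

lemma upper_triangular_inj_on:
  assumes fin: "finite S" and ut: "upper_triangular S T" and diag: "\<forall>j\<in>S. T j j \<noteq> 0"
  shows "inj_on (mapply S T) (espace S)"
proof -
  interpret T: Vector_Spaces.linear fscale fscale "mapply S T" by (rule linear_mapply)
  have "z = 0" if z: "z \<in> espace S" "mapply S T z = 0" for z
  proof (rule ccontr)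
    assume "z \<noteq> 0"
    define Z where "Z = {s\<in>S. z s \<noteq> 0}"
    have "finite Z" "Z \<noteq> {}"
      using fin z(1) \<open>z \<noteq> 0\<close> by (auto simp: Z_def espace_def fun_eq_iff)
    then have m: "Max Z \<in> S" "z (Max Z) \<noteq> 0" and above: "\<And>s. s \<in> Z \<Longrightarrow> s \<le> Max Z"
      using Max_in[of Z] by (auto simp: Z_def)
    \<comment> \<open>the last nonzero coordinate of z only meets the diagonal entry of T\<close>
    have "\<forall>s\<in>S - {Max Z}. T (Max Z) s * z s = 0"
      using ut above by (force simp: upper_triangular_def Z_def)
    then have "(\<Sum>s\<in>S - {Max Z}. T (Max Z) s * z s) = 0"
      by (rule sum.neutral)
    moreover have "mapply S T z (Max Z)
        = T (Max Z) (Max Z) * z (Max Z) + (\<Sum>s\<in>S - {Max Z}. T (Max Z) s * z s)"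
      unfolding mapply_def by (rule sum.remove[OF fin m(1)])
    ultimately show False
      using z(2) m diag by simp
  qed
  then show ?thesis
    using T.inj_on_iff_eq_0[OF subspace_espace] by blast
qed

lemma upper_triangular_image_espace:
  assumes fin: "finite S" and ut: "upper_triangular S T" and inj: "inj_on (mapply S T) (espace S)"
    and X: "down_closed S X"
  shows "mapply S T ` espace X = espace X"
proof (rule linear_inj_on_espace_surj)
  have "X \<subseteq> S" using X by (simp add: down_closed_def)
  then show "finite X" "inj_on (mapply S T) (espace X)"
    using fin inj by (auto intro: finite_subset inj_on_subset espace_mono)
  show "x \<in> espace X \<Longrightarrow> mapply S T x \<in> espace X" for x
    using mapply_invariant[OF upper_triangular_invariant[OF ut X]] .
qed (rule linear_mapply)

lemma upper_triangular_reflects_espace: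
  assumes "finite S" "upper_triangular S T" "inj_on (mapply S T) (espace S)" "down_closed S X"
    and "x \<in> espace S" "mapply S T x \<in> espace X"
  shows "x \<in> espace X"
proof -
  obtain y where "y \<in> espace X" "mapply S T x = mapply S T y"
    using upper_triangular_image_espace[OF assms(1-4)] assms(6) by force
  moreover have "espace X \<subseteq> espace S"
    using assms(4) by (auto simp: down_closed_def intro: espace_mono)
  ultimately show ?thesis
    using assms(3,5) inj_onD by fastforce
qed

lemma inj_on_if_left_inverse:
  "finite S \<Longrightarrow> mmult S Ti T = midentity S \<Longrightarrow> inj_on (mapply S T) (espace S)"
  by (rule inj_on_inverseI[of _ "mapply S Ti"]) (simp add: mapply_mmult mapply_midentity)

lemma right_inverse_imp_left_inverse:
  assumes fin: "finite S" and inj: "inj_on (mapply S T) (espace S)"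
    and T_entry: "\<And>i j. T i j \<noteq> 0 \<Longrightarrow> i \<in> S \<and> j \<in> S"
    and Ti_entry: "\<And>i j. Ti i j \<noteq> 0 \<Longrightarrow> i \<in> S"
    and TTi: "mmult S T Ti = midentity S"
  shows "mmult S Ti T = midentity S"
proof (rule ext, rule ext)
  fix i j
  show "mmult S Ti T i j = midentity S i j"
  proof (cases "j \<in> S")
    case False
    then have "(\<lambda>k. T k j) = 0"
      using T_entry by (auto simp: fun_eq_iff)
    then show ?thesis
      using False by (simp add: mmult_col midentity_def)
  next
    case True
    have e: "unit_vec j \<in> espace S" "mapply S T (unit_vec j) \<in> espace S"
      using True T_entry by (auto intro: unit_vec_espace espaceI simp: mapply_unit_vec[OF fin])
    have "mapply S Ti y \<in> espace S" for y
      using Ti_entry by (intro espaceI) (fastforce simp: mapply_def intro!: sum.neutral)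
    moreover have "mapply S T (mapply S Ti (mapply S T (unit_vec j))) = mapply S T (unit_vec j)"
      unfolding mapply_mmult[of S T Ti] TTi by (rule mapply_midentity[OF fin e(2)])
    ultimately have "mapply S Ti (mapply S T (unit_vec j)) = unit_vec j"
      using inj e(1) by (meson inj_onD)
    moreover have "mmult S Ti T i j = mapply S Ti (mapply S T (unit_vec j)) i"
      by (simp add: mmult_col mapply_unit_vec[OF fin True])
    ultimately show ?thesis
      using True by (simp add: midentity_def unit_vec_def)
  qed
qed

lemma upper_triangular_invertible:
  assumes fin: "finite S" and ut: "upper_triangular S T" and diag: "\<forall>j\<in>S. T j j \<noteq> 0"
  obtains Ti where "mmult S T Ti = midentity S" "mmult S Ti T = midentity S"
proof -
  have inj: "inj_on (mapply S T) (espace S)"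
    by (rule upper_triangular_inj_on[OF assms])
  have "\<forall>j\<in>S. \<exists>u. u \<in> espace S \<and> mapply S T u = unit_vec j"
    using upper_triangular_image_espace[OF fin ut inj down_closed_self] unit_vec_espace
    by (metis (no_types, lifting) imageE)
  then obtain u where u: "\<And>j. j \<in> S \<Longrightarrow> u j \<in> espace S \<and> mapply S T (u j) = unit_vec j"
    by (metis (no_types, lifting))
  define Ti where "Ti i j = (if j \<in> S then u j i else 0)" for i j
  have "(\<lambda>k. Ti k j) = (if j \<in> S then u j else 0)" for j
    by (auto simp: Ti_def fun_eq_iff)
  then have TTi: "mmult S T Ti = midentity S"
    using u by (auto simp: fun_eq_iff mmult_col midentity_def unit_vec_def)
  moreover have "mmult S Ti T = midentity S"
  proof (rule right_inverse_imp_left_inverse[OF fin inj _ _ TTi])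
    show "T i j \<noteq> 0 \<Longrightarrow> i \<in> S \<and> j \<in> S" for i j
      using ut by (auto simp: upper_triangular_def)
    show "Ti i j \<noteq> 0 \<Longrightarrow> i \<in> S" for i j
      using u by (auto simp: Ti_def espace_def split: if_splits)
  qed
  ultimately show ?thesis
    using that by blast
qed

section \<open>Grading and elementary differentials\<close>

definition deg_part :: "(nat \<Rightarrow> int) \<Rightarrow> int \<Rightarrow> (nat \<Rightarrow> 'a::field) \<Rightarrow> nat \<Rightarrow> 'a" where
  "deg_part deg k x = (\<lambda>i. if deg i = k then x i else 0)"

definition homogeneous :: "(nat \<Rightarrow> int) \<Rightarrow> int \<Rightarrow> (nat \<Rightarrow> 'a::field) set" where
  "homogeneous deg k = {v. \<forall>i. deg i \<noteq> k \<longrightarrow> v i = 0}"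

lemma deg_part_add: "deg_part deg k (x + y) = deg_part deg k x + deg_part deg k y"
  by (simp add: deg_part_def fun_eq_iff)

lemma deg_part_espace: "x \<in> espace X \<Longrightarrow> deg_part deg k x \<in> espace X"
  by (simp add: deg_part_def espace_def)

lemma deg_part_homogeneous: "deg_part deg k x \<in> homogeneous deg k"
  by (simp add: deg_part_def homogeneous_def)

lemma deg_part_id: "x \<in> homogeneous deg k \<Longrightarrow> deg_part deg k x = x"
  by (auto simp: deg_part_def homogeneous_def fun_eq_iff)

lemma subspace_homogeneous: "fvs.subspace (homogeneous deg k)"
  by (simp add: fvs.subspace_def homogeneous_def)

lemma espace_deg_eq: "espace_deg S deg k = espace S \<inter> homogeneous deg k"
  by (auto simp: espace_deg_def espace_def homogeneous_def)

lemma mapply_deg_part: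
  assumes "\<And>i j. T i j \<noteq> 0 \<Longrightarrow> deg i = deg j + d"
  shows "mapply S T (deg_part deg k x) = deg_part deg (k + d) (mapply S T x)"
proof
  fix i
  have "T i j * deg_part deg k x j = (if deg i = k + d then T i j * x j else 0)" for j
    using assms[of i j] by (cases "T i j = 0") (auto simp: deg_part_def)
  then show "mapply S T (deg_part deg k x) i = deg_part deg (k + d) (mapply S T x) i"
    by (simp add: mapply_def deg_part_def)
qed

lemma elementary_entry:
  assumes "is_elementary S deg E" "E i j \<noteq> 0"
  shows "i \<in> S" "j \<in> S" "i < j" "deg i = deg j - 1" "E i j = 1" "\<forall>i'. i' \<noteq> i \<longrightarrow> E i' j = 0"
proof -
  show ij: "i \<in> S" "j \<in> S" "i < j" "deg i = deg j - 1"
    using assms by (auto simp: is_elementary_def is_Mdiff_def)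
  obtain i0 where "E i0 j = 1" "\<forall>i'. i' \<noteq> i0 \<longrightarrow> E i' j = 0"
    using assms ij(2) by (auto simp: is_elementary_def)
  moreover have "i0 = i"
    using calculation(2) assms(2) by metis
  ultimately show "E i j = 1" "\<forall>i'. i' \<noteq> i \<longrightarrow> E i' j = 0"
    by auto
qed

lemma elementary_col_unique:
  "is_elementary S deg E \<Longrightarrow> E i j \<noteq> 0 \<Longrightarrow> E i' j \<noteq> 0 \<Longrightarrow> i = i'"
  using elementary_entry(6) by blast

lemma elementary_row_unique:
  assumes "is_elementary S deg E" "E i j \<noteq> 0" "E i j' \<noteq> 0"
  shows "j = j'"
  using assms elementary_entry(2)[OF assms(1)] by (auto simp: is_elementary_def)

lemma elementary_col:
  assumes "is_elementary S deg E" "E i j \<noteq> 0"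
  shows "(\<lambda>k. E k j) = unit_vec i"
  using elementary_entry(5,6)[OF assms] by (auto simp: unit_vec_def)

lemma mapply_elementary_row:
  assumes el: "is_elementary S deg E" and fin: "finite S" and ij: "E i j \<noteq> 0"
  shows "mapply S E x i = x j"
proof -
  have "E i s * x s = (if s = j then x j else 0)" for s
    using elementary_row_unique[OF el ij, of s] elementary_entry(5)[OF el ij]
    by (cases "E i s = 0") auto
  then show ?thesis
    using elementary_entry(2)[OF el ij] fin by (simp add: mapply_def)
qed

lemma mapply_elementary_espace:
  assumes "is_elementary S deg E"
  shows "mapply S' E x \<in> espace S"
proof (rule espaceI)
  fix i assume "i \<notin> S"
  then have "E i j = 0" for j
    using elementary_entry(1)[OF assms] by blast
  then show "mapply S' E x i = 0"
    by (simp add: mapply_def)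
qed

lemma is_elementaryI:
  assumes "finite S"
    and "\<And>i j. E i j \<noteq> 0 \<Longrightarrow> i \<in> S \<and> j \<in> S \<and> i < j \<and> deg i = deg j - 1"
    and "\<And>i j. mmult S E E i j = 0"
    and "\<And>i j. E i j \<noteq> 0 \<Longrightarrow> E i j = 1"
    and "\<And>i i' j. E i j \<noteq> 0 \<Longrightarrow> E i' j \<noteq> 0 \<Longrightarrow> i = i'"
    and "\<And>i j j'. E i j \<noteq> 0 \<Longrightarrow> E i j' \<noteq> 0 \<Longrightarrow> j = j'"
  shows "is_elementary S deg E"
proof -
  have "(\<forall>i. E i j = 0) \<or> (\<exists>i\<in>S. E i j = 1 \<and> (\<forall>i'. i' \<noteq> i \<longrightarrow> E i' j = 0))" for j
    using assms(2,4,5) by metis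
  then show ?thesis
    using assms(1,2,3,6) by (auto simp: is_elementary_def is_Mdiff_def fun_eq_iff)
qed

lemma is_elementary_mono:
  assumes el: "is_elementary S' deg E" and S': "S' \<subseteq> S" and fin: "finite S"
  shows "is_elementary S deg E"
proof (rule is_elementaryI[OF fin])
  show "E i j \<noteq> 0 \<Longrightarrow> i \<in> S \<and> j \<in> S \<and> i < j \<and> deg i = deg j - 1" for i j
    using elementary_entry[OF el] S' by blast
  have "mmult S E E i j = mmult S' E E i j" for i j
    unfolding mmult_def
    by (rule sum.mono_neutral_right[OF fin S']) (use elementary_entry(1)[OF el] in auto)
  then show "mmult S E E i j = 0" for i j
    using el by (simp add: is_elementary_def is_Mdiff_def)
qed (use elementary_entry(5)[OF el] elementary_col_unique[OF el] elementary_row_unique[OF el] in auto)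

lemma is_elementary_insert_pair:
  assumes el: "is_elementary S deg E" and fin: "finite S" and above: "\<forall>s\<in>S. s < m"
    and r: "r \<in> S" "\<And>j. E r j = 0" "\<And>i. E i r = 0" "deg r = deg m - 1"
  shows "is_elementary (insert m S) deg (\<lambda>i j. if j = m then unit_vec r i else E i j)"
    (is "is_elementary _ _ ?E")
proof (rule is_elementaryI)
  have m: "m \<notin> S" and rm: "r \<noteq> m" using above r(1) by auto
  show "finite (insert m S)" using fin by simp
  show "?E i j \<noteq> 0 \<Longrightarrow> i \<in> insert m S \<and> j \<in> insert m S \<and> i < j \<and> deg i = deg j - 1" for i j
    using elementary_entry[OF el, of i j] r(1,4) above by (auto simp: unit_vec_def split: if_splits)
  show "mmult (insert m S) ?E ?E i j = 0" for i j
  proof (cases "j = m")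
    case True
    have "mmult (insert m S) ?E ?E i j = (\<Sum>k\<in>insert m S. if k = r then ?E i r else 0)"
      unfolding mmult_def using True by (intro sum.cong) (auto simp: unit_vec_def)
    then show ?thesis
      using fin r(1,3) rm by simp
  next
    case False
    have "mmult (insert m S) ?E ?E i j = mmult (insert m S) E E i j"
      unfolding mmult_def using False elementary_entry(1)[OF el, of m j] m
      by (intro sum.cong) auto
    moreover have "is_elementary (insert m S) deg E"
      using is_elementary_mono[OF el _ \<open>finite (insert m S)\<close>] by blast
    ultimately show ?thesis
      by (simp add: is_elementary_def is_Mdiff_def)
  qed
  show "?E i j \<noteq> 0 \<Longrightarrow> ?E i j = 1" for i j
    using elementary_entry(5)[OF el] by (auto simp: unit_vec_def)
  show "?E i j \<noteq> 0 \<Longrightarrow> ?E i' j \<noteq> 0 \<Longrightarrow> i = i'" for i i' j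
    using elementary_col_unique[OF el] by (auto simp: unit_vec_def split: if_splits)
  show "?E i j \<noteq> 0 \<Longrightarrow> ?E i j' \<noteq> 0 \<Longrightarrow> j = j'" for i j j'
    using elementary_row_unique[OF el] r(2) by (auto simp: unit_vec_def split: if_splits)
qed

section \<open>Existence of the canonical form\<close>

definition reduction :: "nat set \<Rightarrow> (nat \<Rightarrow> int) \<Rightarrow> (nat \<Rightarrow> nat \<Rightarrow> 'a::field) \<Rightarrow>
    (nat \<Rightarrow> nat \<Rightarrow> 'a) \<Rightarrow> (nat \<Rightarrow> nat \<Rightarrow> 'a) \<Rightarrow> bool" where
  "reduction S deg D T E \<longleftrightarrow> upper_triangular S T \<and> (\<forall>i j. T i j \<noteq> 0 \<longrightarrow> deg i = deg j)
     \<and> (\<forall>j\<in>S. T j j \<noteq> 0) \<and> mmult S D T = mmult S T E \<and> is_elementary S deg E"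

lemma Mdiff_invariant: "is_Mdiff S deg D \<Longrightarrow> down_closed S X \<Longrightarrow> invariant X D"
  by (rule upper_triangular_invariant[OF Mdiff_upper_triangular])

lemma down_closed_insert_top: "\<forall>s\<in>S. s < m \<Longrightarrow> down_closed (insert m S) S"
  by (auto simp: down_closed_def)

locale reduction_step =
  fixes S :: "nat set" and m :: nat and deg :: "nat \<Rightarrow> int" and D T E :: "nat \<Rightarrow> nat \<Rightarrow> 'a::field"
  assumes finite_S: "finite S" and below_m: "\<forall>s\<in>S. s < m"
    and Mdiff: "is_Mdiff (insert m S) deg D"
    and reduction: "reduction S deg (mrestrict S D) T E"
begin

lemma m_notin: "m \<notin> S"
  using below_m by blast

lemma finite_insert_m: "finite (insert m S)"
  using finite_S by simp

lemma D_entry: "D i j \<noteq> 0 \<Longrightarrow> i \<in> insert m S \<and> j \<in> insert m S \<and> i < j \<and> deg i = deg j - 1"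
  using Mdiff by (auto simp: is_Mdiff_def)

lemma T_upper_triangular: "upper_triangular S T"
  and T_deg: "T i j \<noteq> 0 \<Longrightarrow> deg i = deg j"
  and T_diag: "j \<in> S \<Longrightarrow> T j j \<noteq> 0"
  and E_elementary: "is_elementary S deg E"
  using reduction by (auto simp: reduction_def)

lemma T_entry: "T i j \<noteq> 0 \<Longrightarrow> i \<in> S \<and> j \<in> S \<and> i \<le> j"
  using T_upper_triangular by (auto simp: upper_triangular_def)

lemma T_espace: "x \<in> espace S \<Longrightarrow> mapply S T x \<in> espace S"
  using mapply_invariant[OF upper_triangular_invariant[OF T_upper_triangular down_closed_self]] .

lemma T_inj: "inj_on (mapply S T) (espace S)"
  using upper_triangular_inj_on[OF finite_S T_upper_triangular] T_diag by blast

lemma D_on_S: "x \<in> espace S \<Longrightarrow> mapply (insert m S) D x = mapply S (mrestrict S D) x"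
  using mapply_mrestrict_invariant[OF finite_insert_m _ Mdiff_invariant[OF Mdiff]]
    down_closed_insert_top[OF below_m] by (simp add: subset_insertI)

lemma D_T: "x \<in> espace S \<Longrightarrow> mapply (insert m S) D (mapply S T x) = mapply S T (mapply S E x)"
  using reduction by (simp add: D_on_S T_espace mapply_mmult reduction_def)

lemma D_T_col: "mapply (insert m S) D (\<lambda>i. T i j) = mapply S T (\<lambda>k. E k j)"
proof -
  have "(\<lambda>i. T i j) \<in> espace S"
    using T_entry by (auto intro: espaceI)
  then have "mapply (insert m S) D (\<lambda>i. T i j) = (\<lambda>i. mmult S (mrestrict S D) T i j)"
    by (simp add: D_on_S mmult_col)
  also have "\<dots> = (\<lambda>i. mmult S T E i j)"
    using reduction by (simp add: reduction_def)
  finally show ?thesis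
    by (simp add: mmult_col)
qed

definition target :: "nat \<Rightarrow> bool" where
  "target i \<longleftrightarrow> (\<exists>j. E i j \<noteq> 0)"

lemma mapply_E_col_agree:
  assumes "\<And>s. s \<in> S \<Longrightarrow> target s \<Longrightarrow> (\<lambda>i. T' i s) = (\<lambda>i. T i s)"
  shows "mapply (insert m S) T' (\<lambda>k. E k j) = mapply S T (\<lambda>k. E k j)"
proof (cases "\<exists>p. E p j \<noteq> 0")
  case True
  then obtain p where p: "E p j \<noteq> 0" ..
  then have "p \<in> S" "target p"
    using elementary_entry(1)[OF E_elementary] by (auto simp: target_def)
  then show ?thesis
    using assms elementary_col[OF E_elementary p] finite_S
    by (simp add: mapply_unit_vec)
qed (simp add: mapply_def)

lemma reduction_col:
  assumes agree: "\<And>s. s \<in> S \<Longrightarrow> target s \<Longrightarrow> (\<lambda>i. T' i s) = (\<lambda>i. T i s)"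
    and j: "j \<noteq> m" "(\<lambda>i. T' i j) = (\<lambda>i. T i j)"
  shows "mapply (insert m S) D (\<lambda>i. T' i j) = mapply (insert m S) T' (\<lambda>k. E k j)"
  using D_T_col[of j] mapply_E_col_agree[OF agree, of j] j(2) by simp

definition boundary_m :: "nat \<Rightarrow> 'a" where
  "boundary_m = (\<lambda>i. D i m)"

lemma D_unit_m: "mapply (insert m S) D (unit_vec m) = boundary_m"
  using mapply_unit_vec[OF finite_insert_m insertI1] by (simp add: boundary_m_def)

lemma boundary_m_espace: "boundary_m \<in> espace S"
  by (rule espaceI) (use D_entry in \<open>force simp: boundary_m_def\<close>)

lemma boundary_m_homogeneous: "boundary_m \<in> homogeneous deg (deg m - 1)"
  using D_entry by (auto simp: boundary_m_def homogeneous_def)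

lemma D_boundary_m: "mapply (insert m S) D boundary_m = 0"
proof -
  have "mapply (insert m S) D boundary_m = (\<lambda>i. mmult (insert m S) D D i m)"
    by (simp add: mapply_def mmult_def boundary_m_def)
  then show ?thesis
    using Mdiff by (simp add: is_Mdiff_def fun_eq_iff)
qed

lemma boundary_m_preimage:
  obtains c where "c \<in> espace S" "c \<in> homogeneous deg (deg m - 1)" "mapply S T c = boundary_m"
proof -
  obtain c0 where c0: "c0 \<in> espace S" "mapply S T c0 = boundary_m"
    using upper_triangular_image_espace[OF finite_S T_upper_triangular T_inj down_closed_self]
      boundary_m_espace by (metis imageE)
  have "mapply S T (deg_part deg (deg m - 1) c0) = deg_part deg (deg m - 1 + 0) (mapply S T c0)"
    by (rule mapply_deg_part) (simp add: T_deg)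
  also have "\<dots> = boundary_m"
    using c0(2) deg_part_id[OF boundary_m_homogeneous] by simp
  finally show ?thesis
    using that deg_part_espace[OF c0(1)] deg_part_homogeneous by blast
qed

end

locale reduction_step_cycle = reduction_step +
  fixes c :: "nat \<Rightarrow> 'a"
  assumes c_espace: "c \<in> espace S" and c_homogeneous: "c \<in> homogeneous deg (deg m - 1)"
    and T_c: "mapply S T c = boundary_m"
begin

lemma E_c: "mapply S E c = 0"
proof -
  have "mapply S T (mapply S E c) = mapply S T 0"
    using D_T[OF c_espace] T_c D_boundary_m by simp
  then show ?thesis
    using T_inj mapply_elementary_espace[OF E_elementary] by (meson espace_zero inj_onD)
qed

lemma c_source: "E i j \<noteq> 0 \<Longrightarrow> c j = 0"
  using E_c mapply_elementary_row[OF E_elementary finite_S] by (metis zero_fun_apply)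

definition lift :: "nat \<Rightarrow> 'a" where
  "lift = (\<lambda>u. \<Sum>i\<in>S. E i u * c i)"

definition c_ess :: "nat \<Rightarrow> 'a" where
  "c_ess = (\<lambda>i. if target i then 0 else c i)"

lemma c_ess_espace: "c_ess \<in> espace S"
  using c_espace by (simp add: c_ess_def espace_def)

lemma E_c_ess: "mapply S E c_ess = 0"
proof
  fix i
  have "E i s * c_ess s = 0" for s
    using c_source[of i s] by (cases "E i s = 0") (auto simp: c_ess_def)
  then show "mapply S E c_ess i = 0 i"
    by (auto simp: mapply_def intro!: sum.neutral)
qed

lemma lift_espace: "lift \<in> espace S"
proof (rule espaceI)
  fix u assume "u \<notin> S"
  then have "E i u = 0" for i
    using elementary_entry(2)[OF E_elementary] by blast
  then show "lift u = 0"
    by (simp add: lift_def)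
qed

lemma lift_homogeneous: "lift \<in> homogeneous deg (deg m)"
proof -
  have "deg u = deg m" if "lift u \<noteq> 0" for u
  proof -
    obtain i where "E i u \<noteq> 0" "c i \<noteq> 0"
      using \<open>lift u \<noteq> 0\<close> unfolding lift_def by (metis (mono_tags, lifting) mult_eq_0_iff sum.neutral)
    then show ?thesis
      using elementary_entry(4)[OF E_elementary] c_homogeneous by (force simp: homogeneous_def)
  qed
  then show ?thesis
    by (auto simp: homogeneous_def)
qed

lemma E_lift: "mapply S E lift = c - c_ess"
proof
  fix i
  show "mapply S E lift i = (c - c_ess) i"
  proof (cases "target i")
    case True
    then obtain u where u: "E i u \<noteq> 0" by (auto simp: target_def)
    have "lift u = (\<Sum>i'\<in>S. if i' = i then c i else 0)"
      unfolding lift_def using elementary_entry(5,6)[OF E_elementary u] by (intro sum.cong) auto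
    then show ?thesis
      using True mapply_elementary_row[OF E_elementary finite_S u] elementary_entry(1)[OF E_elementary u]
        finite_S by (simp add: c_ess_def)
  qed (simp add: mapply_def target_def c_ess_def)
qed

definition new_col :: "nat \<Rightarrow> 'a" where
  "new_col = unit_vec m - mapply S T lift"

lemma D_new_col: "mapply (insert m S) D new_col = mapply S T c_ess"
proof -
  have "mapply (insert m S) D (mapply S T lift) = mapply S T c - mapply S T c_ess"
    by (simp add: D_T[OF lift_espace] E_lift mapply_diff)
  then show ?thesis
    by (simp add: new_col_def mapply_diff D_unit_m T_c)
qed

lemma new_col_entry: "new_col i \<noteq> 0 \<Longrightarrow> i = m \<or> (i \<in> S \<and> i < m \<and> deg i = deg m)"
proof (cases "i = m")
  case False
  assume "new_col i \<noteq> 0"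
  then have "mapply S T lift i \<noteq> 0"
    using False by (simp add: new_col_def unit_vec_def)
  then obtain s where "T i s \<noteq> 0" "lift s \<noteq> 0"
    by (rule mapply_nonzeroE)
  then show ?thesis
    using T_entry T_deg lift_homogeneous below_m by (force simp: homogeneous_def)
qed simp

lemma new_col_m: "new_col m = 1"
  using espaceD[OF T_espace[OF lift_espace] m_notin] by (simp add: new_col_def unit_vec_def)

lemma reduction_extend_unpaired:
  assumes "c_ess = 0"
  shows "reduction (insert m S) deg D (\<lambda>i j. if j = m then new_col i else T i j) E"
    (is "reduction _ _ _ ?T _")
  unfolding reduction_def
proof (intro conjI allI impI ballI)
  show "upper_triangular (insert m S) ?T"
    using new_col_entry T_entry by (fastforce simp: upper_triangular_def)
  show "?T i j \<noteq> 0 \<Longrightarrow> deg i = deg j" for i j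
    using new_col_entry T_deg by (auto split: if_splits)
  show "j \<in> insert m S \<Longrightarrow> ?T j j \<noteq> 0" for j
    using new_col_m T_diag by auto
  show "is_elementary (insert m S) deg E"
    by (rule is_elementary_mono[OF E_elementary _ finite_insert_m]) blast
  have "mapply (insert m S) D (\<lambda>i. ?T i j) = mapply (insert m S) ?T (\<lambda>k. E k j)" for j
  proof (cases "j = m")
    case True
    have "(\<lambda>k. E k m) = (\<lambda>k. 0)"
      using elementary_entry(2)[OF E_elementary] m_notin by auto
    then show ?thesis
      using True D_new_col assms by (simp add: fun_eq_iff)
  next
    case False
    then show ?thesis
      by (intro reduction_col) (use m_notin in auto)
  qed
  then show "mmult (insert m S) D ?T = mmult (insert m S) ?T E"
    by (rule mmult_eq_by_columns)
qed

end

locale reduction_step_pair = reduction_step_cycle +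
  fixes r :: nat
  assumes r_in: "r \<in> S" and r_ess: "c_ess r \<noteq> 0"
    and r_max: "\<And>s. s \<in> S \<Longrightarrow> c_ess s \<noteq> 0 \<Longrightarrow> s \<le> r"
begin

lemma r_not_target: "\<not> target r"
  using r_ess by (auto simp: c_ess_def)

lemma r_not_source: "E i r = 0"
  using c_source[of i r] r_ess by (auto simp: c_ess_def split: if_splits)

lemma deg_r: "deg r = deg m - 1"
  using c_homogeneous r_ess by (auto simp: c_ess_def homogeneous_def split: if_splits)

lemma r_neq_m: "r \<noteq> m"
  using r_in m_notin by blast

definition r_col :: "nat \<Rightarrow> 'a" where
  "r_col = fscale (1 / c_ess r) (mapply S T c_ess)"

lemma r_col_entry: "r_col i \<noteq> 0 \<Longrightarrow> i \<in> S \<and> i \<le> r \<and> deg i = deg r"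
proof -
  assume "r_col i \<noteq> 0"
  then obtain s where s: "s \<in> S" "T i s \<noteq> 0" "c_ess s \<noteq> 0"
    by (auto simp: r_col_def elim: mapply_nonzeroE)
  have "deg s = deg m - 1"
    using s(3) c_homogeneous by (auto simp: c_ess_def homogeneous_def split: if_splits)
  then show ?thesis
    using T_entry[OF s(2)] T_deg[OF s(2)] r_max[OF s(1,3)] deg_r by simp
qed

lemma r_col_r: "r_col r = T r r"
proof -
  have "\<forall>s\<in>S - {r}. T r s * c_ess s = 0"
    using T_entry r_max by (force intro: antisym)
  then have "(\<Sum>s\<in>S - {r}. T r s * c_ess s) = 0"
    by (rule sum.neutral)
  then have "mapply S T c_ess r = T r r * c_ess r"
    unfolding mapply_def by (simp add: sum.remove[OF finite_S r_in])
  then show ?thesis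
    using r_ess by (simp add: r_col_def)
qed

lemma D_r_col: "mapply (insert m S) D r_col = 0"
  by (simp add: r_col_def mapply_scale D_T[OF c_ess_espace] E_c_ess fun_eq_iff)

definition pair_T :: "nat \<Rightarrow> nat \<Rightarrow> 'a" where
  "pair_T = (\<lambda>i j. if j = m then fscale (1 / c_ess r) new_col i else if j = r then r_col i else T i j)"

definition pair_E :: "nat \<Rightarrow> nat \<Rightarrow> 'a" where
  "pair_E = (\<lambda>i j. if j = m then unit_vec r i else E i j)"

lemma pair_T_col: "j \<noteq> m \<Longrightarrow> j \<noteq> r \<Longrightarrow> (\<lambda>i. pair_T i j) = (\<lambda>i. T i j)"
  by (simp add: pair_T_def)

lemma D_pair_T_col:
  "mapply (insert m S) D (\<lambda>i. pair_T i j) = mapply (insert m S) pair_T (\<lambda>k. pair_E k j)"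
proof -
  consider "j = m" | "j = r" | "j \<noteq> m" "j \<noteq> r" by blast
  then show ?thesis
  proof cases
    case 1
    have "mapply (insert m S) pair_T (unit_vec r) = r_col"
      using mapply_unit_vec[OF finite_insert_m, of r pair_T] r_in r_neq_m by (simp add: pair_T_def)
    moreover have "(\<lambda>i. pair_T i m) = fscale (1 / c_ess r) new_col"
      by (simp add: pair_T_def fun_eq_iff)
    moreover have "(\<lambda>k. pair_E k m) = unit_vec r"
      by (simp add: pair_E_def fun_eq_iff)
    ultimately show ?thesis
      using 1 by (simp add: mapply_scale D_new_col r_col_def)
  next
    case 2
    then show ?thesis
      using D_r_col r_not_source r_neq_m by (simp add: pair_T_def pair_E_def)
  next
    case 3
    have "mapply (insert m S) D (\<lambda>i. pair_T i j) = mapply (insert m S) pair_T (\<lambda>k. E k j)"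
      using 3 r_not_target m_notin by (intro reduction_col) (auto intro!: pair_T_col)
    then show ?thesis
      using 3 by (simp add: pair_E_def)
  qed
qed

lemma reduction_extend_paired: "reduction (insert m S) deg D pair_T pair_E"
  unfolding reduction_def
proof (intro conjI allI impI ballI)
  show "upper_triangular (insert m S) pair_T"
    using new_col_entry r_col_entry T_entry r_in below_m
    by (fastforce simp: upper_triangular_def pair_T_def split: if_splits)
  show "pair_T i j \<noteq> 0 \<Longrightarrow> deg i = deg j" for i j
    using new_col_entry r_col_entry T_deg by (auto simp: pair_T_def split: if_splits)
  show "j \<in> insert m S \<Longrightarrow> pair_T j j \<noteq> 0" for j
    using new_col_m r_col_r T_diag r_ess r_neq_m by (auto simp: pair_T_def)
  show "is_elementary (insert m S) deg pair_E"
    unfolding pair_E_def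
    using is_elementary_insert_pair[OF E_elementary finite_S below_m r_in] r_not_target r_not_source deg_r
    by (simp add: target_def)
  show "mmult (insert m S) D pair_T = mmult (insert m S) pair_T pair_E"
    by (rule mmult_eq_by_columns[OF D_pair_T_col])
qed

end

context reduction_step
begin

lemma reduction_extend: "\<exists>T' E'. reduction (insert m S) deg D T' E'"
proof -
  obtain c where c: "c \<in> espace S" "c \<in> homogeneous deg (deg m - 1)" "mapply S T c = boundary_m"
    by (rule boundary_m_preimage)
  interpret reduction_step_cycle S m deg D T E c
    by unfold_locales (fact c)+
  show ?thesis
  proof (cases "c_ess = 0")
    case True
    then show ?thesis
      using reduction_extend_unpaired by blast
  next
    case False
    define R where "R = {s\<in>S. c_ess s \<noteq> 0}"
    have R: "finite R" "R \<noteq> {}"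
      using False finite_S c_ess_espace by (auto simp: R_def espace_def fun_eq_iff)
    interpret reduction_step_pair S m deg D T E c "Max R"
      by unfold_locales (use Max_in[OF R] Max_ge[OF R(1)] in \<open>auto simp: R_def\<close>)
    show ?thesis
      using reduction_extend_paired by blast
  qed
qed

end

lemma reduction_exists:
  assumes "is_Mdiff S deg D"
  shows "\<exists>T E. reduction S deg D T E"
proof -
  have "finite S"
    using assms by (simp add: is_Mdiff_def)
  then show ?thesis
    using assms
  proof (induction S arbitrary: D rule: finite_linorder_max_induct)
    case empty
    then have "D = (\<lambda>i j. 0)"
      by (auto simp: is_Mdiff_def fun_eq_iff)
    then have "reduction {} deg D (\<lambda>i j. 0) (\<lambda>i j. 0)"
      by (simp add: reduction_def upper_triangular_def mmult_def is_elementary_def is_Mdiff_def fun_eq_iff)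
    then show ?case by blast
  next
    case (insert m S)
    have "is_Mdiff S deg (mrestrict S D)"
      using is_Mdiff_restrict[OF insert.prems _ Mdiff_invariant[OF insert.prems]]
        down_closed_insert_top insert.hyps(2) by blast
    then obtain T E where "reduction S deg (mrestrict S D) T E"
      using insert.IH by blast
    then interpret reduction_step S m deg D T E
      using insert by unfold_locales auto
    show ?case
      by (rule reduction_extend)
  qed
qed

lemma reduction_Mequiv:
  assumes Md: "is_Mdiff S deg D" and red: "reduction S deg D T E"
  shows "Mequiv S deg D E"
proof -
  have fin: "finite S"
    using Md by (simp add: is_Mdiff_def)
  obtain Ti where Ti: "mmult S T Ti = midentity S" "mmult S Ti T = midentity S"
    using upper_triangular_invertible[OF fin] red by (auto simp: reduction_def)
  have "mmult S Ti (mmult S D T) = mmult S (mmult S Ti T) E"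
    using red by (simp add: reduction_def mmult_assoc)
  also have "\<dots> = E"
    using Ti(2) mmult_midentity_left[OF fin] elementary_entry(1) red by (simp add: reduction_def) blast
  finally show ?thesis
    using red Ti unfolding Mequiv_def is_filt_aut_def reduction_def upper_triangular_def by metis
qed

section \<open>Uniqueness of the canonical form\<close>

text \<open>The pairs of the canonical form, described without reference to it
  (see Mequiv_filtered_pair_iff below).\<close>
definition filtered_pair :: "nat set \<Rightarrow> (nat \<Rightarrow> nat \<Rightarrow> 'a::field) \<Rightarrow> nat \<Rightarrow> nat \<Rightarrow> bool" where
  "filtered_pair S D j i \<longleftrightarrow> j \<in> S \<and> i \<in> S \<and>
     (\<exists>v\<in>espace {s\<in>S. s \<le> j}. mapply S D v \<in> espace {s\<in>S. s \<le> i} \<and>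
        (\<forall>u\<in>espace {s\<in>S. s < j}. \<forall>w\<in>espace {s\<in>S. s < i}. mapply S D v \<noteq> mapply S D u + w))"

lemma espace_filtration_subset: "x \<in> espace {s\<in>S. P s} \<Longrightarrow> x \<in> espace S"
  by (erule espace_mono) blast

locale filtered_conjugacy =
  fixes S :: "nat set" and T D E :: "nat \<Rightarrow> nat \<Rightarrow> 'a::field"
  assumes finite_S: "finite S" and T_upper_triangular: "upper_triangular S T"
    and T_inj: "inj_on (mapply S T) (espace S)"
    and D_T: "\<And>x. x \<in> espace S \<Longrightarrow> mapply S D (mapply S T x) = mapply S T (mapply S E x)"
    and E_espace: "\<And>x. mapply S E x \<in> espace S"
begin

lemma T_espace: "down_closed S X \<Longrightarrow> x \<in> espace X \<Longrightarrow> mapply S T x \<in> espace X"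
  by (rule mapply_invariant[OF upper_triangular_invariant[OF T_upper_triangular]])

lemma T_preimage: "down_closed S X \<Longrightarrow> x \<in> espace X \<Longrightarrow> \<exists>x'\<in>espace X. x = mapply S T x'"
  using upper_triangular_image_espace[OF finite_S T_upper_triangular T_inj] by blast

lemma T_reflects: "down_closed S X \<Longrightarrow> x \<in> espace S \<Longrightarrow> mapply S T x \<in> espace X \<Longrightarrow> x \<in> espace X"
  by (rule upper_triangular_reflects_espace[OF finite_S T_upper_triangular T_inj])

lemma filtered_pair_E_if_D:
  assumes "filtered_pair S D j i"
  shows "filtered_pair S E j i"
proof -
  obtain v where ij: "j \<in> S" "i \<in> S" and v: "v \<in> espace {s\<in>S. s \<le> j}"
    and Dv: "mapply S D v \<in> espace {s\<in>S. s \<le> i}"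
    and nd: "\<And>u w. u \<in> espace {s\<in>S. s < j} \<Longrightarrow> w \<in> espace {s\<in>S. s < i} \<Longrightarrow>
      mapply S D v \<noteq> mapply S D u + w"
    using assms unfolding filtered_pair_def by blast
  obtain v' where v': "v' \<in> espace {s\<in>S. s \<le> j}" "v = mapply S T v'"
    using T_preimage[OF down_closed_le v] by blast
  have DTv': "mapply S D v = mapply S T (mapply S E v')"
    using D_T[OF espace_filtration_subset[OF v'(1)]] v'(2) by simp
  have "mapply S E v' \<in> espace {s\<in>S. s \<le> i}"
    using T_reflects[OF down_closed_le E_espace] Dv DTv' by simp
  moreover have "mapply S E v' \<noteq> mapply S E u' + w'"
    if u': "u' \<in> espace {s\<in>S. s < j}" and w': "w' \<in> espace {s\<in>S. s < i}" for u' w'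
  proof
    assume "mapply S E v' = mapply S E u' + w'"
    then have "mapply S D v = mapply S D (mapply S T u') + mapply S T w'"
      using DTv' D_T[OF espace_filtration_subset[OF u']] by (simp add: mapply_add)
    then show False
      using nd[OF T_espace[OF down_closed_less u'] T_espace[OF down_closed_less w']] by blast
  qed
  ultimately show ?thesis
    unfolding filtered_pair_def using ij v'(1) by blast
qed

lemma filtered_pair_D_if_E:
  assumes "filtered_pair S E j i"
  shows "filtered_pair S D j i"
proof -
  obtain v' where ij: "j \<in> S" "i \<in> S" and v': "v' \<in> espace {s\<in>S. s \<le> j}"
    and Ev': "mapply S E v' \<in> espace {s\<in>S. s \<le> i}"
    and nd: "\<And>u w. u \<in> espace {s\<in>S. s < j} \<Longrightarrow> w \<in> espace {s\<in>S. s < i} \<Longrightarrow>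
      mapply S E v' \<noteq> mapply S E u + w"
    using assms unfolding filtered_pair_def by blast
  have DTv': "mapply S D (mapply S T v') = mapply S T (mapply S E v')"
    by (rule D_T[OF espace_filtration_subset[OF v']])
  have "mapply S D (mapply S T v') \<noteq> mapply S D u + w"
    if u: "u \<in> espace {s\<in>S. s < j}" and w: "w \<in> espace {s\<in>S. s < i}" for u w
  proof
    assume eq: "mapply S D (mapply S T v') = mapply S D u + w"
    obtain u' w' where u': "u' \<in> espace {s\<in>S. s < j}" "u = mapply S T u'"
      and w': "w' \<in> espace {s\<in>S. s < i}" "w = mapply S T w'"
      using T_preimage[OF down_closed_less u] T_preimage[OF down_closed_less w] by blast
    have "mapply S T (mapply S E v') = mapply S T (mapply S E u' + w')"
      using eq DTv' D_T[OF espace_filtration_subset[OF u'(1)]] u'(2) w'(2) by (simp add: mapply_add)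
    then have "mapply S E v' = mapply S E u' + w'"
      by (rule inj_onD[OF T_inj])
        (use E_espace espace_filtration_subset[OF w'(1)] in \<open>auto intro: espace_add\<close>)
    then show False
      using nd u'(1) w'(1) by blast
  qed
  moreover have "mapply S D (mapply S T v') \<in> espace {s\<in>S. s \<le> i}"
    unfolding DTv' by (rule T_espace[OF down_closed_le Ev'])
  ultimately show ?thesis
    unfolding filtered_pair_def using ij T_espace[OF down_closed_le v'] by blast
qed

end

lemma filtered_pair_if_elementary_entry:
  assumes el: "is_elementary S deg E" and fin: "finite S" and Eij: "E i j \<noteq> 0"
  shows "filtered_pair S E j i"
proof -
  note ij = elementary_entry(1,2)[OF el Eij]
  have Ev: "mapply S E (unit_vec j) = unit_vec i"
    unfolding mapply_unit_vec[OF fin ij(2)] by (rule elementary_col[OF el Eij])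
  have "unit_vec i \<noteq> mapply S E u + w"
    if "u \<in> espace {s\<in>S. s < j}" "w \<in> espace {s\<in>S. s < i}" for u w
  proof
    assume eq: "unit_vec i = mapply S E u + w"
    have "1 = (mapply S E u + w) i"
      using fun_cong[OF eq, of i] by (simp add: unit_vec_def)
    also have "\<dots> = u j + w i"
      by (simp add: mapply_elementary_row[OF el fin Eij])
    finally show False
      using that by (simp add: espace_def)
  qed
  then show ?thesis
    unfolding filtered_pair_def using ij Ev
    by (intro conjI bexI[of _ "unit_vec j"]) (auto intro: unit_vec_espace)
qed

lemma elementary_entry_if_filtered_pair:
  assumes el: "is_elementary S deg E" and fin: "finite S" and P: "filtered_pair S E j i"
  shows "E i j \<noteq> 0"
proof
  assume Eij: "E i j = 0"
  obtain v where ij: "j \<in> S" "i \<in> S" and v: "v \<in> espace {s\<in>S. s \<le> j}"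
    and Ev: "mapply S E v \<in> espace {s\<in>S. s \<le> i}"
    and nd: "\<And>u w. u \<in> espace {s\<in>S. s < j} \<Longrightarrow> w \<in> espace {s\<in>S. s < i} \<Longrightarrow>
      mapply S E v \<noteq> mapply S E u + w"
    using P unfolding filtered_pair_def by blast
  define v' where "v' = v - fscale (v j) (unit_vec j)"
  define w where "w = fscale (v j) (\<lambda>k. E k j)"
  have v': "v' \<in> espace {s\<in>S. s < j}"
    using v by (auto simp: espace_def v'_def unit_vec_def)
  have Ev_split: "mapply S E v = mapply S E v' + w"
    by (simp add: v'_def w_def mapply_diff mapply_scale mapply_unit_vec[OF fin ij(1)])
  \<comment> \<open>a nonzero w is a multiple of the target p of a_j, and Ev forces p \<le> i, so p < i\<close>
  have "w \<in> espace {s\<in>S. s < i}"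
  proof (cases "v j = 0 \<or> (\<forall>k. E k j = 0)")
    case True
    then show ?thesis
      by (auto simp: w_def espace_def)
  next
    case False
    then obtain p where p: "E p j \<noteq> 0" and vj: "v j \<noteq> 0" by blast
    have "mapply S E v p = v j"
      by (rule mapply_elementary_row[OF el fin p])
    then have "p \<le> i"
      using Ev vj elementary_entry(1)[OF el p] by (auto simp: espace_def)
    moreover have "p \<noteq> i"
      using p Eij by blast
    ultimately show ?thesis
      using elementary_col[OF el p] elementary_entry(1)[OF el p]
      by (auto simp: w_def espace_def unit_vec_def)
  qed
  then show False
    using nd[OF v'] Ev_split by blast
qed

lemma Mequiv_filtered_pair_iff:
  assumes Md: "is_Mdiff S deg D" and el: "is_elementary S deg E" and eq: "Mequiv S deg D E"
  shows "E i j \<noteq> 0 \<longleftrightarrow> filtered_pair S D j i"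
proof -
  have fin: "finite S"
    using Md by (simp add: is_Mdiff_def)
  obtain T Ti where fa: "is_filt_aut S deg T" and TTi: "mmult S T Ti = midentity S"
    and TiT: "mmult S Ti T = midentity S" and E: "E = mmult S Ti (mmult S D T)"
    using eq by (auto simp: Mequiv_def)
  have ut: "upper_triangular S T"
    using fa by (auto simp: is_filt_aut_def upper_triangular_def)
  have rows: "i \<in> S" if "mmult S D T i j \<noteq> 0" for i j
  proof (rule ccontr)
    assume "i \<notin> S"
    then have "D i k = 0" for k
      using Md by (auto simp: is_Mdiff_def)
    then show False
      using that by (simp add: mmult_def)
  qed
  have "mmult S T E = mmult S (mmult S T Ti) (mmult S D T)"
    by (simp add: E mmult_assoc)
  also have "\<dots> = mmult S D T"
    using TTi mmult_midentity_left[OF fin rows] by simp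
  finally have "mapply S D (mapply S T x) = mapply S T (mapply S E x)" for x
    by (simp add: mapply_mmult)
  then interpret filtered_conjugacy S T D E
    using fin ut inj_on_if_left_inverse[OF fin TiT] mapply_elementary_espace[OF el]
    by unfold_locales auto
  show ?thesis
    using filtered_pair_E_if_D filtered_pair_D_if_E filtered_pair_if_elementary_entry[OF el fin]
      elementary_entry_if_filtered_pair[OF el fin] by blast
qed

lemma barannikov_elementary_Mequiv:
  assumes Md: "is_Mdiff S deg D"
  shows "is_elementary S deg (barannikov S deg D)" "Mequiv S deg D (barannikov S deg D)"
proof -
  obtain T E where red: "reduction S deg D T E"
    using reduction_exists[OF Md] by blast
  have el: "is_elementary S deg E" and eq: "Mequiv S deg D E"
    using red reduction_Mequiv[OF Md red] by (auto simp: reduction_def)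
  have "E' = E" if el': "is_elementary S deg E'" and eq': "Mequiv S deg D E'" for E'
  proof (intro ext)
    fix i j
    have "E' i j \<noteq> 0 \<longleftrightarrow> E i j \<noteq> 0"
      using Mequiv_filtered_pair_iff[OF Md el' eq'] Mequiv_filtered_pair_iff[OF Md el eq] by blast
    then show "E' i j = E i j"
      using elementary_entry(5)[OF el, of i j] elementary_entry(5)[OF el', of i j]
      by (cases "E i j = 0") auto
  qed
  then have "barannikov S deg D = E"
    unfolding barannikov_def using el eq by blast
  then show "is_elementary S deg (barannikov S deg D)" "Mequiv S deg D (barannikov S deg D)"
    using el eq by simp_all
qed

lemma is_pair_filtered_pair:
  assumes "is_Mdiff S deg D" "is_pair S deg D i j"
  shows "filtered_pair S D i j"
  using Mequiv_filtered_pair_iff[OF assms(1) barannikov_elementary_Mequiv[OF assms(1)], of j i] assms(2)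
  by (simp add: is_pair_def)

section \<open>M-pairs\<close>

locale M_pair =
  fixes A B :: "nat set" and deg :: "nat \<Rightarrow> int" and D :: "nat \<Rightarrow> nat \<Rightarrow> 'a::field"
  assumes Mpair: "is_Mpair A B deg D"
begin

lemma Mdiff_A: "is_Mdiff A deg D"
  and B_subset: "B \<subseteq> A"
  and D_espace_B: "x \<in> espace B \<Longrightarrow> mapply A D x \<in> espace B"
  using Mpair by (auto simp: is_Mpair_def)

lemma finite_A: "finite A"
  using Mdiff_A by (simp add: is_Mdiff_def)

lemma D_entry: "D i j \<noteq> 0 \<Longrightarrow> i \<in> A \<and> j \<in> A \<and> i < j \<and> deg i = deg j - 1"
  using Mdiff_A by (auto simp: is_Mdiff_def)

lemma DD: "mapply A D (mapply A D x) = 0"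
proof -
  have "mmult A D D = (\<lambda>i j. 0)"
    using Mdiff_A by (simp add: is_Mdiff_def)
  then show ?thesis
    by (simp only: mapply_mmult) (simp add: mapply_def fun_eq_iff)
qed

lemma invariant_down_closed:
  assumes "down_closed B X"
  shows "invariant X D"
  unfolding invariant_def
proof (intro allI impI)
  fix i j assume j: "j \<in> X" and Dij: "D i j \<noteq> 0"
  have jB: "j \<in> B"
    using j assms by (auto simp: down_closed_def)
  then have "mapply A D (unit_vec j) = (\<lambda>i. D i j)"
    using mapply_unit_vec[OF finite_A] B_subset by blast
  then have "(\<lambda>i. D i j) \<in> espace B"
    using D_espace_B[OF unit_vec_espace[OF jB]] by simp
  then have "i \<in> B"
    using Dij by (auto simp: espace_def)
  then show "i \<in> X"
    using assms j D_entry[OF Dij] unfolding down_closed_def by (meson less_imp_le)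
qed

lemma D_restrict:
  assumes "down_closed B X" "x \<in> espace X"
  shows "mapply X (mrestrict X D) x = mapply A D x"
  using mapply_mrestrict_invariant[OF finite_A _ invariant_down_closed[OF assms(1)] assms(2)]
    assms(1) B_subset by (auto simp: down_closed_def)

lemma Mdiff_B: "is_Mdiff B deg (mrestrict B D)"
  using is_Mdiff_restrict[OF Mdiff_A B_subset invariant_down_closed[OF down_closed_self]] .

lemma I_pre_iff:
  assumes "down_closed B X"
  shows "t \<in> I_pre A B D X \<longleftrightarrow>
    (\<exists>z x. t = z + mapply A D x \<and> z \<in> espace X \<and> mapply A D z = 0 \<and> x \<in> espace B) \<and>
    t \<in> conn_image A B D"
proof -
  have "cycles X (mrestrict X D) = {z \<in> espace X. mapply A D z = 0}"
    using D_restrict[OF assms] by (auto simp: cycles_def)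
  moreover have "boundaries B (mrestrict B D) = mapply A D ` espace B"
    using D_restrict[OF down_closed_self] by (auto simp: boundaries_def)
  ultimately show ?thesis
    by (auto simp: I_pre_def)
qed

lemma I_pre_mono: "I_pre A B D {c\<in>B. c < b} \<subseteq> I_pre A B D {c\<in>B. c \<le> b}"
proof
  fix t assume "t \<in> I_pre A B D {c\<in>B. c < b}"
  moreover have "espace {c\<in>B. c < b} \<subseteq> espace {c\<in>B. c \<le> b}"
    by (auto intro: espace_mono)
  ultimately show "t \<in> I_pre A B D {c\<in>B. c \<le> b}"
    unfolding I_pre_iff[OF down_closed_less] I_pre_iff[OF down_closed_le] by blast
qed

lemma I_pre_le_subset_if_cycles_vanish:
  assumes "\<And>z. z \<in> espace {c\<in>B. c \<le> b} \<Longrightarrow> mapply A D z = 0 \<Longrightarrow> z b = 0"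
  shows "I_pre A B D {c\<in>B. c \<le> b} \<subseteq> I_pre A B D {c\<in>B. c < b}"
  unfolding I_pre_iff[OF down_closed_less] I_pre_iff[OF down_closed_le] subset_iff
  using assms espace_le_imp_lt by blast

lemma I_pre_le_subset_if_boundary:
  assumes v: "v \<in> espace B" and Dv: "mapply A D v \<in> espace {c\<in>B. c \<le> b}" "mapply A D v b \<noteq> 0"
  shows "I_pre A B D {c\<in>B. c \<le> b} \<subseteq> I_pre A B D {c\<in>B. c < b}"
proof
  fix t assume "t \<in> I_pre A B D {c\<in>B. c \<le> b}"
  then obtain z x where t: "t = z + mapply A D x" and z: "z \<in> espace {c\<in>B. c \<le> b}"
    "mapply A D z = 0" and x: "x \<in> espace B" and tC: "t \<in> conn_image A B D"
    unfolding I_pre_iff[OF down_closed_le] by blast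
  \<comment> \<open>trade the top coefficient of the cycle z for the boundary of a multiple of v\<close>
  define k where "k = z b / mapply A D v b"
  define z' where "z' = z - fscale k (mapply A D v)"
  have "z' \<in> espace {c\<in>B. c \<le> b}" "z' b = 0"
    using z(1) Dv by (auto simp: z'_def k_def intro: espace_diff espace_scale)
  then have "z' \<in> espace {c\<in>B. c < b}"
    by (rule espace_le_imp_lt)
  moreover have "mapply A D z' = 0"
    using z(2) DD[of v] by (simp add: z'_def mapply_diff mapply_scale fun_eq_iff)
  moreover have "x + fscale k v \<in> espace B"
    using x v by (intro espace_add espace_scale)
  moreover have "t = z' + mapply A D (x + fscale k v)"
    by (simp add: t z'_def mapply_add mapply_scale)
  ultimately show "t \<in> I_pre A B D {c\<in>B. c < b}"
    unfolding I_pre_iff[OF down_closed_less] using tC by blast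
qed

lemma cycles_vanish_if_source:
  assumes P: "filtered_pair B (mrestrict B D) b i"
    and z: "z \<in> espace {c\<in>B. c \<le> b}" "mapply A D z = 0"
  shows "z b = 0"
proof (rule ccontr)
  assume zb: "z b \<noteq> 0"
  obtain v where v: "v \<in> espace {c\<in>B. c \<le> b}"
    and nd: "\<And>u w. u \<in> espace {c\<in>B. c < b} \<Longrightarrow> w \<in> espace {c\<in>B. c < i} \<Longrightarrow>
      mapply B (mrestrict B D) v \<noteq> mapply B (mrestrict B D) u + w"
    using P unfolding filtered_pair_def by blast
  \<comment> \<open>adding a multiple of the cycle z removes the top coefficient of v without changing its boundary\<close>
  define u where "u = v - fscale (v b / z b) z"
  have "u \<in> espace {c\<in>B. c \<le> b}" "u b = 0"
    using v z(1) zb by (auto simp: u_def intro: espace_diff espace_scale)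
  then have "u \<in> espace {c\<in>B. c < b}"
    by (rule espace_le_imp_lt)
  moreover have "mapply B (mrestrict B D) z = 0"
    using D_restrict[OF down_closed_self espace_filtration_subset[OF z(1)]] z(2) by simp
  then have "mapply B (mrestrict B D) v = mapply B (mrestrict B D) u + 0"
    by (simp add: u_def mapply_diff mapply_scale fun_eq_iff)
  ultimately show False
    using nd espace_zero by blast
qed

lemma boundary_if_target:
  assumes P: "filtered_pair B (mrestrict B D) j b"
  obtains v where "v \<in> espace B" "mapply A D v \<in> espace {c\<in>B. c \<le> b}" "mapply A D v b \<noteq> 0"
proof -
  obtain v where v: "v \<in> espace {c\<in>B. c \<le> j}"
    and Dv: "mapply B (mrestrict B D) v \<in> espace {c\<in>B. c \<le> b}"
    and nd: "\<And>u w. u \<in> espace {c\<in>B. c < j} \<Longrightarrow> w \<in> espace {c\<in>B. c < b} \<Longrightarrow>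
      mapply B (mrestrict B D) v \<noteq> mapply B (mrestrict B D) u + w"
    using P unfolding filtered_pair_def by blast
  have vB: "v \<in> espace B"
    using v by (rule espace_filtration_subset)
  have DvA: "mapply B (mrestrict B D) v = mapply A D v"
    by (rule D_restrict[OF down_closed_self vB])
  have "mapply A D v b \<noteq> 0"
  proof
    assume "mapply A D v b = 0"
    then have "mapply A D v \<in> espace {c\<in>B. c < b}"
      using Dv unfolding DvA by (rule espace_le_imp_lt[rotated])
    then show False
      using nd[of 0 "mapply A D v"] DvA by simp
  qed
  then show ?thesis
    using that vB Dv DvA by simp
qed

lemma hom_essential_if_bdry_essential:
  assumes "bdry_essential A B D b"
  shows "hom_essential B deg (mrestrict B D) b"
proof -
  have b: "b \<in> B" and ne: "I_pre A B D {c\<in>B. c \<le> b} \<noteq> I_pre A B D {c\<in>B. c < b}"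
    using assms by (auto simp: bdry_essential_def)
  have "I_pre A B D {c\<in>B. c \<le> b} \<subseteq> I_pre A B D {c\<in>B. c < b}"
    if "is_pair B deg (mrestrict B D) b x \<or> is_pair B deg (mrestrict B D) x b" for x
    using that
  proof
    assume "is_pair B deg (mrestrict B D) b x"
    then have "filtered_pair B (mrestrict B D) b x"
      by (rule is_pair_filtered_pair[OF Mdiff_B])
    then show ?thesis
      using cycles_vanish_if_source I_pre_le_subset_if_cycles_vanish by blast
  next
    assume "is_pair B deg (mrestrict B D) x b"
    then have "filtered_pair B (mrestrict B D) x b"
      by (rule is_pair_filtered_pair[OF Mdiff_B])
    then obtain v where "v \<in> espace B" "mapply A D v \<in> espace {c\<in>B. c \<le> b}" "mapply A D v b \<noteq> 0"
      by (rule boundary_if_target)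
    then show ?thesis
      by (rule I_pre_le_subset_if_boundary)
  qed
  then show ?thesis
    using b ne I_pre_mono by (auto simp: hom_essential_def)
qed

end

context M_pair
begin

lemma D_deg_part: "mapply A D (deg_part deg (k + 1) x) = deg_part deg k (mapply A D x)"
  using mapply_deg_part[of D deg "-1" A "k + 1" x] D_entry by force

lemma D_deg_part_cycle: "mapply A D z = 0 \<Longrightarrow> mapply A D (deg_part deg k z) = 0"
  using D_deg_part[of "k - 1" z] by (simp add: deg_part_def fun_eq_iff)

lemma conn_image_eq: "conn_image A B D = mapply A D ` (espace A \<inter> {x. mapply A D x \<in> espace B})"
  by (auto simp: conn_image_def)

lemma subspace_conn_image: "fvs.subspace (conn_image A B D)"
proof -
  interpret D: Vector_Spaces.linear fscale fscale "mapply A D" by (rule linear_mapply)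
  show ?thesis
    unfolding conn_image_eq
    by (simp add: D.subspace_image fvs.subspace_inter subspace_espace D.subspace_linear_preimage)
qed

lemma conn_image_espace: "t \<in> conn_image A B D \<Longrightarrow> t \<in> espace A"
  using B_subset by (auto simp: conn_image_def intro: espace_mono)

lemma deg_part_conn_image:
  assumes "t \<in> conn_image A B D"
  shows "deg_part deg k t \<in> conn_image A B D"
proof -
  obtain x where x: "t = mapply A D x" "x \<in> espace A" "mapply A D x \<in> espace B"
    using assms by (auto simp: conn_image_def)
  then have "deg_part deg k t = mapply A D (deg_part deg (k + 1) x)"
    by (simp add: D_deg_part)
  moreover have "deg_part deg (k + 1) x \<in> espace A" "mapply A D (deg_part deg (k + 1) x) \<in> espace B"
    using x deg_part_espace by (auto simp: D_deg_part)
  ultimately show ?thesis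
    unfolding conn_image_def by blast
qed

lemma subspace_I_pre: "fvs.subspace (I_pre A B D X)"
proof -
  interpret DX: Vector_Spaces.linear fscale fscale "mapply X (mrestrict X D)" by (rule linear_mapply)
  interpret DB: Vector_Spaces.linear fscale fscale "mapply B (mrestrict B D)" by (rule linear_mapply)
  have "I_pre A B D X = {z + y |z y. z \<in> espace X \<inter> {x. mapply X (mrestrict X D) x = 0}
      \<and> y \<in> mapply B (mrestrict B D) ` espace B} \<inter> conn_image A B D"
    by (auto simp: I_pre_def cycles_def boundaries_def)
  also have "fvs.subspace \<dots>"
    by (intro fvs.subspace_inter fvs.subspace_sums subspace_espace DX.subspace_kernel
        DB.subspace_image subspace_conn_image)
  finally show ?thesis .
qed

lemma deg_part_I_pre:
  assumes "down_closed B X" "t \<in> I_pre A B D X"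
  shows "deg_part deg k t \<in> I_pre A B D X"
proof -
  obtain z x where t: "t = z + mapply A D x" "z \<in> espace X" "mapply A D z = 0" "x \<in> espace B"
    "t \<in> conn_image A B D"
    using assms I_pre_iff by blast
  then have "deg_part deg k t = deg_part deg k z + mapply A D (deg_part deg (k + 1) x)"
    by (simp add: deg_part_add D_deg_part)
  then show ?thesis
    unfolding I_pre_iff[OF assms(1)]
    using t D_deg_part_cycle deg_part_espace deg_part_conn_image by blast
qed

lemma deg_part_I_pre_less:
  assumes n: "deg n \<noteq> k" and t: "t \<in> I_pre A B D {c\<in>B. c \<le> n}"
  shows "deg_part deg k t \<in> I_pre A B D {c\<in>B. c < n}"
proof -
  obtain z x where z: "t = z + mapply A D x" "z \<in> espace {c\<in>B. c \<le> n}" "mapply A D z = 0"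
    and x: "x \<in> espace B" and tC: "t \<in> conn_image A B D"
    using t I_pre_iff[OF down_closed_le] by blast
  have "deg_part deg k z \<in> espace {c\<in>B. c < n}"
    by (rule espace_le_imp_lt) (use deg_part_espace[OF z(2)] n in \<open>auto simp: deg_part_def\<close>)
  moreover have "deg_part deg k t = deg_part deg k z + mapply A D (deg_part deg (k + 1) x)"
    using z(1) by (simp add: deg_part_add D_deg_part)
  ultimately show ?thesis
    unfolding I_pre_iff[OF down_closed_less]
    using z(3) D_deg_part_cycle deg_part_espace[OF x] deg_part_conn_image[OF tC] by blast
qed

lemma diff_deg_part_I_pre_less:
  assumes n: "deg n = k" and t: "t \<in> I_pre A B D {c\<in>B. c \<le> n}"
  shows "t - deg_part deg k t \<in> I_pre A B D {c\<in>B. c < n}"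
proof -
  obtain z x where z: "t = z + mapply A D x" "z \<in> espace {c\<in>B. c \<le> n}" "mapply A D z = 0"
    and x: "x \<in> espace B" and tC: "t \<in> conn_image A B D"
    using t I_pre_iff[OF down_closed_le] by blast
  have "z - deg_part deg k z \<in> espace {c\<in>B. c < n}"
    by (rule espace_le_imp_lt) (use z(2) n in \<open>auto simp: deg_part_def espace_def\<close>)
  moreover have "mapply A D (z - deg_part deg k z) = 0"
    using z(3) D_deg_part_cycle by (simp add: mapply_diff)
  moreover have "t - deg_part deg k t = (z - deg_part deg k z) + mapply A D (x - deg_part deg (k + 1) x)"
    using z(1) by (simp add: deg_part_add mapply_diff D_deg_part)
  moreover have "t - deg_part deg k t \<in> conn_image A B D"
    using tC deg_part_conn_image[OF tC] by (rule fvs.subspace_diff[OF subspace_conn_image])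
  ultimately show ?thesis
    unfolding I_pre_iff[OF down_closed_less]
    using x deg_part_espace[OF x] by (blast intro: espace_diff)
qed

text \<open>The coefficient of b_n in the cycle part is the only freedom that I_n adds to I_(n-1).\<close>
lemma I_pre_le_combination:
  assumes s: "s \<in> I_pre A B D {c\<in>B. c \<le> n}"
    and w: "w \<in> I_pre A B D {c\<in>B. c \<le> n}" "w \<notin> I_pre A B D {c\<in>B. c < n}"
  obtains a where "s - fscale a w \<in> I_pre A B D {c\<in>B. c < n}"
proof -
  obtain zs xs where zs: "s = zs + mapply A D xs" "zs \<in> espace {c\<in>B. c \<le> n}" "mapply A D zs = 0"
    "xs \<in> espace B"
    using s I_pre_iff[OF down_closed_le] by blast
  obtain zw xw where zw: "w = zw + mapply A D xw" "zw \<in> espace {c\<in>B. c \<le> n}" "mapply A D zw = 0"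
    "xw \<in> espace B"
    using w(1) I_pre_iff[OF down_closed_le] by blast
  have conn: "s \<in> conn_image A B D" "w \<in> conn_image A B D"
    using s w(1) I_pre_iff[OF down_closed_le] by blast+
  have "zw n \<noteq> 0"
  proof
    assume "zw n = 0"
    then have "zw \<in> espace {c\<in>B. c < n}"
      by (rule espace_le_imp_lt[OF zw(2)])
    then show False
      using w zw conn(2) I_pre_iff[OF down_closed_less] by blast
  qed
  define a where "a = zs n / zw n"
  have "zs - fscale a zw \<in> espace {c\<in>B. c < n}"
    by (rule espace_le_imp_lt) (use zs(2) zw(2) \<open>zw n \<noteq> 0\<close> in \<open>auto simp: a_def intro: espace_diff espace_scale\<close>)
  moreover have "mapply A D (zs - fscale a zw) = 0"
    using zs(3) zw(3) by (simp add: mapply_diff mapply_scale fun_eq_iff)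
  moreover have "xs - fscale a xw \<in> espace B"
    using zs(4) zw(4) by (intro espace_diff espace_scale)
  moreover have "s - fscale a w = (zs - fscale a zw) + mapply A D (xs - fscale a xw)"
    by (simp add: zs(1) zw(1) mapply_diff mapply_scale algebra_simps)
  moreover have "s - fscale a w \<in> conn_image A B D"
    using conn by (intro fvs.subspace_diff[OF subspace_conn_image] fvs.subspace_scale[OF subspace_conn_image])
  ultimately show ?thesis
    using that I_pre_iff[OF down_closed_less] by blast
qed

end

context M_pair
begin

definition I_deg :: "nat \<Rightarrow> int \<Rightarrow> (nat \<Rightarrow> 'a) set" where
  "I_deg n k = I_pre A B D {c\<in>B. c < n} \<inter> homogeneous deg k"

lemma subspace_I_deg: "fvs.subspace (I_deg n k)"
  by (simp add: I_deg_def fvs.subspace_inter subspace_I_pre subspace_homogeneous)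

lemma I_deg_espace: "I_deg n k \<subseteq> espace A"
  using I_pre_iff[OF down_closed_less] conn_image_espace by (auto simp: I_deg_def)

lemma I_deg_Suc: "I_deg (Suc n) k = I_pre A B D {c\<in>B. c \<le> n} \<inter> homogeneous deg k"
  by (simp add: I_deg_def less_Suc_eq_le)

lemma I_deg_Suc_subset_span:
  assumes w: "w \<in> I_deg (Suc n) k" "w \<notin> I_pre A B D {c\<in>B. c < n}"
  shows "I_deg (Suc n) k \<subseteq> fvs.span (insert w (I_deg n k))"
proof
  fix s assume s: "s \<in> I_deg (Suc n) k"
  have "s \<in> I_pre A B D {c\<in>B. c \<le> n}" "w \<in> I_pre A B D {c\<in>B. c \<le> n}"
    using s w(1) by (auto simp: I_deg_Suc)
  then obtain a where a: "s - fscale a w \<in> I_pre A B D {c\<in>B. c < n}"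
    using I_pre_le_combination w(2) by blast
  have "s - fscale a w \<in> homogeneous deg k"
    using s w(1) unfolding I_deg_Suc
    by (intro fvs.subspace_diff[OF subspace_homogeneous] fvs.subspace_scale[OF subspace_homogeneous]) auto
  with a have "s - fscale a w \<in> I_deg n k"
    by (simp add: I_deg_def)
  then have "(s - fscale a w) + fscale a w \<in> fvs.span (insert w (I_deg n k))"
    by (intro fvs.span_add fvs.span_scale fvs.span_base) auto
  then show "s \<in> fvs.span (insert w (I_deg n k))"
    by simp
qed

lemma dim_I_deg_Suc_essential:
  assumes n: "deg n = k" and ne: "I_pre A B D {c\<in>B. c \<le> n} \<noteq> I_pre A B D {c\<in>B. c < n}"
  shows "fvs.dim (I_deg (Suc n) k) = fvs.dim (I_deg n k) + 1"
proof -
  obtain t where t: "t \<in> I_pre A B D {c\<in>B. c \<le> n}" "t \<notin> I_pre A B D {c\<in>B. c < n}"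
    using ne I_pre_mono by blast
  define w where "w = deg_part deg k t"
  have w: "w \<in> I_deg (Suc n) k"
    using deg_part_I_pre[OF down_closed_le t(1)] deg_part_homogeneous by (simp add: w_def I_deg_Suc)
  have w_notin: "w \<notin> I_pre A B D {c\<in>B. c < n}"
    using diff_deg_part_I_pre_less[OF n t(1)] t(2) fvs.subspace_add[OF subspace_I_pre]
    unfolding w_def by fastforce
  have "I_deg n k \<subseteq> I_deg (Suc n) k"
    unfolding I_deg_Suc using I_pre_mono by (auto simp: I_deg_def)
  then show ?thesis
    using dim_insert_espace[OF finite_A I_deg_espace subspace_I_deg _ I_deg_Suc_subset_span[OF w w_notin] w]
      w_notin by (simp add: I_deg_def)
qed

lemma dim_I_deg_Suc:
  "fvs.dim (I_deg (Suc n) k) = fvs.dim (I_deg n k) + (if bdry_essential A B D n \<and> deg n = k then 1 else 0)"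
proof (cases "n \<in> B")
  case False
  then have "{c\<in>B. c < Suc n} = {c\<in>B. c < n}"
    by (auto simp: less_Suc_eq)
  then show ?thesis
    using False by (simp add: I_deg_def bdry_essential_def)
next
  case True
  consider "deg n \<noteq> k" | "deg n = k" "I_pre A B D {c\<in>B. c \<le> n} = I_pre A B D {c\<in>B. c < n}"
    | "deg n = k" "I_pre A B D {c\<in>B. c \<le> n} \<noteq> I_pre A B D {c\<in>B. c < n}"
    by blast
  then show ?thesis
  proof cases
    case 1
    have "I_deg (Suc n) k = I_deg n k"
      unfolding I_deg_Suc using deg_part_I_pre_less[OF 1] deg_part_id I_pre_mono
      by (fastforce simp: I_deg_def)
    then show ?thesis
      using 1 by simp
  next
    case 2
    then have "I_deg (Suc n) k = I_deg n k"
      unfolding I_deg_Suc by (simp add: I_deg_def)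
    then show ?thesis
      using 2 by (simp add: bdry_essential_def)
  next
    case 3
    then show ?thesis
      using dim_I_deg_Suc_essential[OF 3] True by (simp add: bdry_essential_def)
  qed
qed

lemma dim_I_deg:
  "fvs.dim (I_deg n k) = fvs.dim (I_deg 0 k) + card {b. bdry_essential A B D b \<and> deg b = k \<and> b < n}"
proof (induction n)
  case (Suc n)
  let ?E = "\<lambda>n. {b. bdry_essential A B D b \<and> deg b = k \<and> b < n}"
  have "finite (?E n)"
    by (rule finite_subset[of _ "{..<n}"]) auto
  moreover have "?E (Suc n) = (if bdry_essential A B D n \<and> deg n = k then insert n (?E n) else ?E n)"
    by (auto simp: less_Suc_eq)
  ultimately have "card (?E (Suc n)) = card (?E n) + (if bdry_essential A B D n \<and> deg n = k then 1 else 0)"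
    by simp
  then show ?case
    using Suc.IH dim_I_deg_Suc[of n k] by linarith
qed simp

lemma D_image_homogeneous:
  assumes V: "\<And>x. x \<in> V \<Longrightarrow> deg_part deg (k + 1) x \<in> V"
  shows "mapply A D ` V \<inter> homogeneous deg k = mapply A D ` (V \<inter> homogeneous deg (k + 1))"
proof (intro equalityI subsetI)
  fix t assume t: "t \<in> mapply A D ` V \<inter> homogeneous deg k"
  then obtain x where x: "x \<in> V" "t = mapply A D x"
    by blast
  have "t = mapply A D (deg_part deg (k + 1) x)"
    using t deg_part_id[of t deg k] by (simp add: x(2) D_deg_part)
  then show "t \<in> mapply A D ` (V \<inter> homogeneous deg (k + 1))"
    using V[OF x(1)] deg_part_homogeneous by blast
next
  fix t assume "t \<in> mapply A D ` (V \<inter> homogeneous deg (k + 1))"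
  then obtain x where x: "x \<in> V" "x \<in> homogeneous deg (k + 1)" "t = mapply A D x"
    by blast
  then have "t \<in> homogeneous deg k"
    using D_deg_part[of k x] deg_part_id[OF x(2)] deg_part_homogeneous by metis
  then show "t \<in> mapply A D ` V \<inter> homogeneous deg k"
    using x by blast
qed

lemma I_pre_bottom: "I_pre A B D {c\<in>B. c < 0} = mapply A D ` espace B"
proof (intro equalityI subsetI)
  fix t assume "t \<in> I_pre A B D {c\<in>B. c < 0}"
  then obtain z x where "t = z + mapply A D x" "z \<in> espace {c\<in>B. c < 0}" "x \<in> espace B"
    unfolding I_pre_iff[OF down_closed_less] by blast
  moreover have "z = 0"
    using calculation(2) by (auto simp: espace_def fun_eq_iff)
  ultimately show "t \<in> mapply A D ` espace B"
    by simp
next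
  fix t assume "t \<in> mapply A D ` espace B"
  then obtain x where x: "x \<in> espace B" "t = mapply A D x"
    by auto
  then have "t = 0 + mapply A D x \<and> 0 \<in> espace {c\<in>B. c < 0} \<and> mapply A D 0 = 0 \<and> x \<in> espace B"
    by simp
  moreover have "t \<in> conn_image A B D"
    using x B_subset D_espace_B by (auto simp: conn_image_def intro: espace_mono)
  ultimately show "t \<in> I_pre A B D {c\<in>B. c < 0}"
    unfolding I_pre_iff[OF down_closed_less] by blast
qed

lemma I_pre_top: "I_pre A B D B = conn_image A B D"
proof (intro equalityI subsetI)
  fix t assume t: "t \<in> conn_image A B D"
  then obtain x where "t = mapply A D x" "mapply A D x \<in> espace B"
    by (auto simp: conn_image_def)
  then have "t = t + mapply A D 0" "t \<in> espace B" "mapply A D t = 0"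
    using DD by auto
  then show "t \<in> I_pre A B D B"
    unfolding I_pre_iff[OF down_closed_self] using t espace_zero by blast
qed (use I_pre_iff[OF down_closed_self] in blast)

lemma I_deg_0: "I_deg 0 k = boundaries_deg B deg (mrestrict B D) k"
proof -
  have "I_deg 0 k = mapply A D ` (espace B \<inter> homogeneous deg (k + 1))"
    unfolding I_deg_def I_pre_bottom by (rule D_image_homogeneous[OF deg_part_espace])
  also have "\<dots> = boundaries_deg B deg (mrestrict B D) k"
    unfolding boundaries_deg_def espace_deg_eq
    by (rule image_cong[OF refl]) (simp add: D_restrict[OF down_closed_self])
  finally show ?thesis .
qed

lemma I_deg_top:
  assumes "\<forall>c\<in>B. c < N"
  shows "I_deg N k = conn_image_deg A B deg D k"
proof -
  let ?V = "espace A \<inter> {x. mapply A D x \<in> espace B}"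
  have "{c\<in>B. c < N} = B"
    using assms by auto
  then have "I_deg N k = mapply A D ` ?V \<inter> homogeneous deg k"
    by (simp add: I_deg_def I_pre_top conn_image_eq)
  also have "\<dots> = mapply A D ` (?V \<inter> homogeneous deg (k + 1))"
    by (rule D_image_homogeneous) (simp add: deg_part_espace D_deg_part)
  also have "\<dots> = conn_image_deg A B deg D k"
    by (auto simp: conn_image_deg_def espace_deg_eq)
  finally show ?thesis .
qed

lemma card_bdry_essential:
  "card {b. bdry_essential A B D b \<and> deg b = k}
     = fvs.dim (conn_image_deg A B deg D k) - fvs.dim (boundaries_deg B deg (mrestrict B D) k)"
proof -
  have "finite B"
    using finite_A B_subset finite_subset by blast
  then obtain N where N: "\<forall>c\<in>B. c < N"
    using finite_nat_set_iff_bounded by blast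
  then have "{b. bdry_essential A B D b \<and> deg b = k \<and> b < N} = {b. bdry_essential A B D b \<and> deg b = k}"
    by (auto simp: bdry_essential_def)
  then show ?thesis
    using dim_I_deg[of N k] I_deg_top[OF N] I_deg_0 by simp
qed

end

theorem lemma3p3:
  fixes A B :: "nat set" and deg :: "nat \<Rightarrow> int" and D :: "nat \<Rightarrow> nat \<Rightarrow> 'a::field"
  assumes "is_Mpair A B deg D"
  shows "(\<forall>b. bdry_essential A B D b \<longrightarrow> hom_essential B deg (mrestrict B D) b)
       \<and> (\<forall>k::int. card {b. bdry_essential A B D b \<and> deg b = k}
             = fvs.dim (conn_image_deg A B deg D k) - fvs.dim (boundaries_deg B deg (mrestrict B D) k))"
proof -
  interpret M_pair A B deg D
    by (rule M_pair.intro[OF assms])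
  show ?thesis
    using hom_essential_if_bdry_essential card_bdry_essential by blast
qed

end
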